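(* Let $M\ge 1$, let $T>0$, and let $k_B>0$ be Boltzmann's constant. For the cyclically closed $2\times2\times M$ lattice model described in the context, with arbitrary real couplings $(J_\alpha)_{\alpha\in\Phi}$, let $Z_{M}(T)=\sum_{\sigma}\exp(-\mathcal H(\sigma)/(k_BT))$, where the sum runs over all $\sigma\in\{-1,1\}^{4M}$. Let $\lambda_{\max}(T)$ be the largest real root of the fourth-degree characteristic equation $\det(\lambda I-\tau)=0$ of the $4\times4$ matrix $\tau=\tau(T)$ defined in the context. Then, in the thermodynamic limit, the free energy per site $f(T)=-k_BT\lim_{M\to\infty}\frac{1}{4M}\ln Z_M(T)$ satisfies $$f(T)=-\frac{k_BT}{4}\ln\lambda_{\max}(T),$$ the internal energy per site $u(T)=-T^2\frac{\partial}{\partial T}\big[f(T)/T\big]$ equals $$u(T)=k_BT^2\frac{\partial}{\partial T}\Big[\tfrac14\ln\lambda_{\max}(T)\Big],$$ and the heat capacity per site $C(T)=\frac{\partial}{\partial T}u(T)$ equals $$C(T)=2k_BT\frac{\partial}{\partial T}\Big[\tfrac14\ln\lambda_{\max}(T)\Big]+k_BT^2\frac{\partial^2}{\partial T^2}\Big[\tfrac14\ln\lambda_{\max}(T)\Big].$$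
   Context: Lattice: sites $t_i^m$, $i\in\{0,1,2,3\}$, $m\in\{0,\dots,M-1\}$, with cyclic closure $t_i^M\equiv t_i^0$ (so $N=4M$ sites); each site carries a spin $\sigma_{t_i^m}=\sigma_i^m\in\{-1,1\}$. For a set $\Omega$ of sites, $\sigma_\Omega=\prod_{t\in\Omega}\sigma_t$. For fixed $m$ write $a_i=t_i^m$, $b_i=t_i^{m+1}$, and let $C_m=\{a_0,a_1,a_2,a_3,b_0,b_1,b_2,b_3\}$ (a unit cube). Let $\rho$ be the rotation of $C_m$ given by $\rho(a_i)=a_{i+1 \bmod 4}$, $\rho(b_i)=b_{i+1\bmod 4}$. Generating supports $\Phi=\Phi_2\cup\Phi_4\cup\Phi_6\cup\Phi_8$ (all subsets of $C_m$): $\Phi_2=\{\{a_0,a_1\},\{a_0,a_2\},\{b_0,b_1\},\{b_0,b_2\},\{a_0,b_0\},\{a_0,b_1\},\{a_0,b_2\},\{a_0,b_3\}\}$; $\Phi_4$ consists of the 22 sets $\{a_0,b_0,b_1,b_2\}$, $\{a_0,b_1,b_2,b_3\}$, $\{a_0,b_2,b_3,b_0\}$, $\{a_0,b_3,b_0,b_1\}$, $\{a_0,a_1,b_0,b_1\}$, $\{a_0,a_1,b_1,b_2\}$, $\{a_0,a_1,b_2,b_3\}$, $\{a_0,a_1,b_3,b_0\}$, $\{a_0,a_1,b_0,b_2\}$, $\{a_0,a_1,b_1,b_3\}$, $\{a_0,a_2,b_0,b_1\}$, $\{a_0,a_2,b_1,b_2\}$, $\{a_0,a_2,b_2,b_3\}$,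 $\{a_0,a_2,b_3,b_0\}$, $\{a_0,a_2,b_0,b_2\}$, $\{a_0,a_2,b_1,b_3\}$, $\{a_0,a_1,a_2,b_0\}$, $\{a_0,a_1,a_2,b_1\}$, $\{a_0,a_1,a_2,b_2\}$, $\{a_0,a_1,a_2,b_3\}$, $\{a_0,a_1,a_2,a_3\}$, $\{b_0,b_1,b_2,b_3\}$; $\Phi_6=\{C_m\setminus\beta:\beta\in\Phi_2\}$; $\Phi_8=\{C_m\}$. Each $\alpha\in\Phi$ carries a real coupling $J_\alpha$, the same for all $m$. The cube Hamiltonian is $\mathcal H^m=-\sum_{\alpha\in\Phi}J_\alpha\sum_{r=0}^{3}\sigma_{\rho^r(\alpha)}$ and the total Hamiltonian is $\mathcal H=\sum_{m=0}^{M-1}\mathcal H^m$. Transfer matrix: index a layer state $(s_0,s_1,s_2,s_3)\in\{-1,1\}^4$ by $k=1+\sum_{i=0}^3 2^i(1-s_i)/2\in\{1,\dots,16\}$. The $16\times16$ matrix $\theta$ has entries $\theta_{k,l}=\exp(-\mathcal H^m/(k_BT))$, where $\mathcal H^m$ is evaluated with $(\sigma_0^m,\dots,\sigma_3^m)$ the state of index $k$ and $(\sigma_0^{m+1},\dots,\sigma_3^{m+1})$ the state of index $l$ (this does not depend on $m$). Let $(r_1,r_2,r_3,r_4)=(1,2,4,6)$ and $G_1=\{1,16\}$, $G_2=\{2,3,5,8,9,12,14,15\}$, $G_3=\{4,7,10,13\}$, $G_4=\{6,11\}$. The $4\times4$ matrix $\tau$ has entries $\tau_{i,j}=\sum_{l\in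 G_j}\theta_{r_i,l}$. *)

theory Defs
  imports Complex_Main "HOL-Analysis.Derivative" "HOL-Library.FuncSet" "Jordan_Normal_Form.Determinant"
begin

text \<open>Positions inside a unit cube C_m: a pair (l, i) with layer offset l (0 for a_i, 1 for b_i)
  and in-layer index i in {0,1,2,3}.\<close>

type_synonym pos = "nat \<times> nat"

definition a :: "nat \<Rightarrow> pos" where "a i = (0, i)"
definition b :: "nat \<Rightarrow> pos" where "b i = (1, i)"

definition rot :: "pos \<Rightarrow> pos" where "rot p = (fst p, (snd p + 1) mod 4)"

definition Cube :: "pos set" where
  "Cube = {a 0, a 1, a 2, a 3, b 0, b 1, b 2, b 3}"

definition Phi2 :: "pos set set" where
  "Phi2 = {{a 0, a 1}, {a 0, a 2}, {b 0, b 1}, {b 0, b 2},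
           {a 0, b 0}, {a 0, b 1}, {a 0, b 2}, {a 0, b 3}}"

definition Phi4 :: "pos set set" where
  "Phi4 = {{a 0, b 0, b 1, b 2}, {a 0, b 1, b 2, b 3}, {a 0, b 2, b 3, b 0}, {a 0, b 3, b 0, b 1},
           {a 0, a 1, b 0, b 1}, {a 0, a 1, b 1, b 2}, {a 0, a 1, b 2, b 3}, {a 0, a 1, b 3, b 0},
           {a 0, a 1, b 0, b 2}, {a 0, a 1, b 1, b 3},
           {a 0, a 2, b 0, b 1}, {a 0, a 2, b 1, b 2}, {a 0, a 2, b 2, b 3}, {a 0, a 2, b 3, b 0},
           {a 0, a 2, b 0, b 2}, {a 0, a 2, b 1, b 3},
           {a 0, a 1, a 2, b 0}, {a 0, a 1, a 2, b 1}, {a 0, a 1, a 2, b 2}, {a 0, a 1, a 2, b 3},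
           {a 0, a 1, a 2, a 3}, {b 0, b 1, b 2, b 3}}"

definition Phi6 :: "pos set set" where "Phi6 = (\<lambda>\<beta>. Cube - \<beta>) ` Phi2"

definition Phi8 :: "pos set set" where "Phi8 = {Cube}"

definition Phi :: "pos set set" where "Phi = Phi2 \<union> Phi4 \<union> Phi6 \<union> Phi8"

definition cube_energy :: "(pos set \<Rightarrow> real) \<Rightarrow> (nat \<Rightarrow> real) \<Rightarrow> (nat \<Rightarrow> real) \<Rightarrow> real" where
  "cube_energy J s s' =
     - (\<Sum>\<alpha>\<in>Phi. J \<alpha> * (\<Sum>r<4. \<Prod>p\<in>(rot ^^ r) ` \<alpha>. (if fst p = 0 then s (snd p) else s' (snd p))))"

text \<open>Spin configurations of the 2x2xM lattice: sigma (m, i) = sigma_i^m, m < M, i < 4.\<close>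

definition configs :: "nat \<Rightarrow> (nat \<times> nat \<Rightarrow> real) set" where
  "configs M = ({0..<M} \<times> {0..<4}) \<rightarrow>\<^sub>E {-1, 1}"

definition total_energy :: "(pos set \<Rightarrow> real) \<Rightarrow> nat \<Rightarrow> (nat \<times> nat \<Rightarrow> real) \<Rightarrow> real" where
  "total_energy J M \<sigma> =
     (\<Sum>m<M. cube_energy J (\<lambda>i. \<sigma> (m, i)) (\<lambda>i. \<sigma> ((m + 1) mod M, i)))"

definition partition_fn :: "(pos set \<Rightarrow> real) \<Rightarrow> real \<Rightarrow> nat \<Rightarrow> real \<Rightarrow> real" where
  "partition_fn J kB M T = (\<Sum>\<sigma>\<in>configs M. exp (- total_energy J M \<sigma> / (kB * T)))"

definition state :: "nat \<Rightarrow> nat \<Rightarrow> real" where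
  "state k i = 1 - 2 * real (((k - 1) div 2 ^ i) mod 2)"

definition theta :: "(pos set \<Rightarrow> real) \<Rightarrow> real \<Rightarrow> real \<Rightarrow> nat \<Rightarrow> nat \<Rightarrow> real" where
  "theta J kB T k l = exp (- cube_energy J (state k) (state l) / (kB * T))"

definition rr :: "nat \<Rightarrow> nat" where
  "rr i = (if i = 1 then 1 else if i = 2 then 2 else if i = 3 then 4 else 6)"

definition GG :: "nat \<Rightarrow> nat set" where
  "GG j = (if j = 1 then {1, 16} else if j = 2 then {2, 3, 5, 8, 9, 12, 14, 15}
           else if j = 3 then {4, 7, 10, 13} else {6, 11})"

text \<open>The 4x4 matrix tau (Jordan_Normal_Form matrices are 0-indexed, so entry (i,j) here is
  tau_{i+1,j+1} of the paper).\<close>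

definition tau :: "(pos set \<Rightarrow> real) \<Rightarrow> real \<Rightarrow> real \<Rightarrow> real mat" where
  "tau J kB T = mat 4 4 (\<lambda>(i, j). \<Sum>l\<in>GG (j + 1). theta J kB T (rr (i + 1)) l)"

definition lambda_max :: "(pos set \<Rightarrow> real) \<Rightarrow> real \<Rightarrow> real \<Rightarrow> real" where
  "lambda_max J kB T = Max {x::real. det (smult_mat x (one_mat 4) - tau J kB T) = 0}"

definition free_energy :: "(pos set \<Rightarrow> real) \<Rightarrow> real \<Rightarrow> real \<Rightarrow> real" where
  "free_energy J kB T = - kB * T * lim (\<lambda>M. ln (partition_fn J kB M T) / (4 * real M))"

definition internal_energy :: "(pos set \<Rightarrow> real) \<Rightarrow> real \<Rightarrow> real \<Rightarrow> real" where
  "internal_energy J kB T = - T\<^sup>2 * deriv (\<lambda>t. free_energy J kB t / t) T"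

definition heat_capacity :: "(pos set \<Rightarrow> real) \<Rightarrow> real \<Rightarrow> real \<Rightarrow> real" where
  "heat_capacity J kB T = deriv (internal_energy J kB) T"

end

theory Submission
  imports Defs "HOL-Analysis.Analysis" "Jordan_Normal_Form.Char_Poly"
begin

text \<open>Summing out the spins layer by layer writes \<open>Z\<^sub>M\<close> as a sum of products of the positive
  \<open>16 \<times> 16\<close> transfer matrix \<open>\<theta>\<close> around a cycle of length \<open>M\<close>. Rotating a layer and flipping all
  spins leave the cube energy invariant, and the classes \<open>G\<^sub>j\<close> are the orbits of these symmetries;
  so \<open>\<theta>\<close> preserves the functions that are constant on classes and acts on them by \<open>\<tau>\<close>. A positive
  eigenvector of \<open>\<tau>\<close>, obtained from Brouwer's fixed point theorem, therefore lifts to a positive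
  eigenvector of \<open>\<theta>\<close>. Its eigenvalue is \<open>\<lambda>\<^sub>m\<^sub>a\<^sub>x\<close> (no real eigenvalue of \<open>\<tau>\<close> exceeds it in
  modulus), and it pins \<open>Z\<^sub>M\<close> between constant multiples of \<open>\<lambda>\<^sub>m\<^sub>a\<^sub>x\<^sup>M\<close>, which gives the free
  energy. Moreover \<open>\<lambda>\<^sub>m\<^sub>a\<^sub>x\<close> is a simple root of \<open>det (\<lambda>I - \<tau>)\<close>, continuous in \<open>T\<close> by a
  Collatz--Wielandt perturbation bound, so the implicit function theorem makes it differentiable
  with a differentiable derivative; the energy and heat capacity then follow by differentiating
  \<open>f(T)/T\<close>.\<close>

section \<open>Positive matrices\<close>

definition positive_eigenvector :: "real mat \<Rightarrow> nat \<Rightarrow> real vec \<Rightarrow> real \<Rightarrow> bool" where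
  "positive_eigenvector A n u lam \<longleftrightarrow>
     u \<in> carrier_vec n \<and> (\<forall>i<n. u $ i > 0) \<and> A *\<^sub>v u = lam \<cdot>\<^sub>v u"

lemma index_mult_mat_vec_sum:
  "A \<in> carrier_mat n m \<Longrightarrow> v \<in> carrier_vec m \<Longrightarrow> i < n \<Longrightarrow>
    (A *\<^sub>v v) $ i = (\<Sum>j<m. A $$ (i, j) * v $ j)"
  by (auto simp: scalar_prod_def lessThan_atLeast0)

lemma positive_eigenvector_row:
  assumes A: "A \<in> carrier_mat n n" and P: "positive_eigenvector A n u lam" and i: "i < n"
  shows "(\<Sum>j<n. A $$ (i, j) * u $ j) = lam * u $ i"
proof -
  have "(A *\<^sub>v u) $ i = (lam \<cdot>\<^sub>v u) $ i" using P by (simp add: positive_eigenvector_def)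
  then show ?thesis using index_mult_mat_vec_sum[OF A _ i, of u] P i
    by (simp add: positive_eigenvector_def)
qed

lemma positive_eigenvector_eigenvector:
  assumes A: "A \<in> carrier_mat n n" and P: "positive_eigenvector A n u lam" and n: "n > 0"
  shows "eigenvector A u lam"
proof -
  have "u $ 0 > 0" using P n by (simp add: positive_eigenvector_def)
  then have "u \<noteq> 0\<^sub>v n" using n by auto
  then show ?thesis using A P by (auto simp: positive_eigenvector_def eigenvector_def)
qed

lemma positive_eigenvalue_pos:
  assumes A: "A \<in> carrier_mat n n" and Apos: "\<And>i j. i < n \<Longrightarrow> j < n \<Longrightarrow> A $$ (i, j) > 0"
    and P: "positive_eigenvector A n u lam" and n: "n > 0"
  shows "lam > 0"
proof -
  have upos: "\<And>j. j < n \<Longrightarrow> u $ j > 0" using P by (simp add: positive_eigenvector_def)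
  have "0 < (\<Sum>j<n. A $$ (0, j) * u $ j)" using n Apos upos by (intro sum_pos) auto
  then have "0 < lam * u $ 0" using positive_eigenvector_row[OF A P n] by simp
  with upos[OF n] show ?thesis by (simp add: zero_less_mult_iff)
qed

lemma max_ratio_witness:
  fixes y z :: "nat \<Rightarrow> real"
  assumes n: "n > 0" and z: "\<And>j. j < n \<Longrightarrow> z j > 0"
  obtains c k where "k < n" "\<And>j. j < n \<Longrightarrow> y j \<le> c * z j" "y k = c * z k"
proof -
  let ?R = "(\<lambda>k. y k / z k) ` {..<n}"
  have fin: "finite ?R" and ne: "?R \<noteq> {}" using n by auto
  obtain k where k: "k < n" "Max ?R = y k / z k" using Max_in[OF fin ne] by auto
  show ?thesis
  proof
    show "y j \<le> Max ?R * z j" if j: "j < n" for j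
    proof -
      have "y j / z j \<le> Max ?R" using fin j by (intro Max_ge) auto
      then show ?thesis using z[OF j] by (simp add: field_simps)
    qed
    show "y k = Max ?R * z k" using k z[OF k(1)] by simp
  qed (fact k)
qed

lemma collatz_wielandt_lower:
  assumes A: "A \<in> carrier_mat n n" and Anng: "\<And>i j. i < n \<Longrightarrow> j < n \<Longrightarrow> A $$ (i, j) \<ge> 0"
    and P: "positive_eigenvector A n u lam"
    and ynn: "\<And>j. j < n \<Longrightarrow> y j \<ge> 0" and k: "k < n" "y k > 0"
    and le: "\<And>i. i < n \<Longrightarrow> \<alpha> * y i \<le> (\<Sum>j<n. A $$ (i, j) * y j)"
  shows "\<alpha> \<le> lam"
proof -
  have upos: "\<And>j. j < n \<Longrightarrow> u $ j > 0" using P by (simp add: positive_eigenvector_def)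
  obtain c k0 where k0: "k0 < n" and yc: "\<And>j. j < n \<Longrightarrow> y j \<le> c * u $ j"
    and eq: "y k0 = c * u $ k0"
    by (rule max_ratio_witness[where z="\<lambda>j. u $ j" and y=y, OF _ upos]) (use k in auto)
  have "0 < c * u $ k" using yc[OF k(1)] k(2) by simp
  then have "c > 0" using upos[OF k(1)] by (simp add: zero_less_mult_iff)
  then have yk0: "y k0 > 0" using eq upos[OF k0] by simp
  have "\<alpha> * y k0 \<le> (\<Sum>j<n. A $$ (k0, j) * y j)" by (rule le[OF k0])
  also have "\<dots> \<le> (\<Sum>j<n. A $$ (k0, j) * (c * u $ j))"
    by (intro sum_mono mult_left_mono yc Anng k0) auto
  also have "\<dots> = c * (\<Sum>j<n. A $$ (k0, j) * u $ j)" by (simp add: sum_distrib_left algebra_simps)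
  also have "\<dots> = lam * y k0" using positive_eigenvector_row[OF A P k0] eq by simp
  finally show ?thesis using yk0 by simp
qed

lemma collatz_wielandt_lower_strict:
  assumes A: "A \<in> carrier_mat n n" and Apos: "\<And>i j. i < n \<Longrightarrow> j < n \<Longrightarrow> A $$ (i, j) > 0"
    and P: "positive_eigenvector A n u lam"
    and ynn: "\<And>j. j < n \<Longrightarrow> y j \<ge> 0" and k: "k < n" "y k > 0" and i0: "i0 < n" "y i0 = 0"
    and le: "\<And>i. i < n \<Longrightarrow> \<alpha> * y i \<le> (\<Sum>j<n. A $$ (i, j) * y j)"
  shows "\<alpha> < lam"
proof -
  have upos: "\<And>j. j < n \<Longrightarrow> u $ j > 0" using P by (simp add: positive_eigenvector_def)
  obtain c k0 where k0: "k0 < n" and yc: "\<And>j. j < n \<Longrightarrow> y j \<le> c * u $ j"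
    and eq: "y k0 = c * u $ k0"
    by (rule max_ratio_witness[where z="\<lambda>j. u $ j" and y=y, OF _ upos]) (use k in auto)
  have "0 < c * u $ k" using yc[OF k(1)] k(2) by simp
  then have cpos: "c > 0" using upos[OF k(1)] by (simp add: zero_less_mult_iff)
  then have yk0: "y k0 > 0" using eq upos[OF k0] by simp
  have "\<alpha> * y k0 \<le> (\<Sum>j<n. A $$ (k0, j) * y j)" by (rule le[OF k0])
  also have "\<dots> < (\<Sum>j<n. A $$ (k0, j) * (c * u $ j))"
  proof (rule sum_strict_mono_ex1)
    show "\<forall>j\<in>{..<n}. A $$ (k0, j) * y j \<le> A $$ (k0, j) * (c * u $ j)"
      using Apos k0 yc by (auto intro!: mult_left_mono less_imp_le)
    show "\<exists>j\<in>{..<n}. A $$ (k0, j) * y j < A $$ (k0, j) * (c * u $ j)"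
      using i0 Apos[OF k0 i0(1)] cpos upos[OF i0(1)] by (intro bexI[of _ i0]) auto
  qed simp
  also have "\<dots> = c * (\<Sum>j<n. A $$ (k0, j) * u $ j)" by (simp add: sum_distrib_left algebra_simps)
  also have "\<dots> = lam * y k0" using positive_eigenvector_row[OF A P k0] eq by simp
  finally show ?thesis using yk0 by simp
qed

lemma collatz_wielandt_upper:
  assumes A: "A \<in> carrier_mat n n" and Anng: "\<And>i j. i < n \<Longrightarrow> j < n \<Longrightarrow> A $$ (i, j) \<ge> 0"
    and P: "positive_eigenvector A n u lam" and n: "n > 0"
    and ypos: "\<And>j. j < n \<Longrightarrow> y j > 0"
    and le: "\<And>i. i < n \<Longrightarrow> (\<Sum>j<n. A $$ (i, j) * y j) \<le> \<beta> * y i"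
  shows "lam \<le> \<beta>"
proof -
  have upos: "\<And>j. j < n \<Longrightarrow> u $ j > 0" using P by (simp add: positive_eigenvector_def)
  obtain c k0 where k0: "k0 < n" and uc: "\<And>j. j < n \<Longrightarrow> u $ j \<le> c * y j"
    and eq: "u $ k0 = c * y k0"
    using max_ratio_witness[where z=y and y="\<lambda>j. u $ j", OF n ypos] by metis
  have cpos: "c > 0" using eq upos[OF k0] ypos[OF k0] by (simp add: zero_less_mult_iff)
  have "lam * u $ k0 = (\<Sum>j<n. A $$ (k0, j) * u $ j)" using positive_eigenvector_row[OF A P k0] by simp
  also have "\<dots> \<le> (\<Sum>j<n. A $$ (k0, j) * (c * y j))"
    by (intro sum_mono mult_left_mono uc Anng k0) auto
  also have "\<dots> = c * (\<Sum>j<n. A $$ (k0, j) * y j)" by (simp add: sum_distrib_left algebra_simps)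
  also have "\<dots> \<le> c * (\<beta> * y k0)" using le[OF k0] cpos by simp
  also have "\<dots> = \<beta> * u $ k0" using eq by simp
  finally show ?thesis using upos[OF k0] by simp
qed

lemma eigenvalue_abs_le_positive_eigenvalue:
  assumes A: "A \<in> carrier_mat n n" and Anng: "\<And>i j. i < n \<Longrightarrow> j < n \<Longrightarrow> A $$ (i, j) \<ge> 0"
    and P: "positive_eigenvector A n u lam"
    and v: "v \<in> carrier_vec n" "v \<noteq> 0\<^sub>v n" "A *\<^sub>v v = x \<cdot>\<^sub>v v"
  shows "\<bar>x\<bar> \<le> lam"
proof -
  obtain k where k: "k < n" "v $ k \<noteq> 0" using v(1,2) by (metis eq_vecI carrier_vecD index_zero_vec)
  show ?thesis
  proof (rule collatz_wielandt_lower[OF A Anng P, of "\<lambda>j. \<bar>v $ j\<bar>" k])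
    fix i assume i: "i < n"
    have "\<bar>x\<bar> * \<bar>v $ i\<bar> = \<bar>(A *\<^sub>v v) $ i\<bar>" using v(1,3) i by (simp add: abs_mult)
    also have "\<dots> = \<bar>\<Sum>j<n. A $$ (i, j) * v $ j\<bar>" using index_mult_mat_vec_sum[OF A v(1) i] by simp
    also have "\<dots> \<le> (\<Sum>j<n. A $$ (i, j) * \<bar>v $ j\<bar>)"
      using Anng i by (intro order.trans[OF sum_abs] sum_mono) (simp add: abs_mult)
    finally show "\<bar>x\<bar> * \<bar>v $ i\<bar> \<le> (\<Sum>j<n. A $$ (i, j) * \<bar>v $ j\<bar>)" .
  qed (use k in auto)
qed

lemma det_smult_one_minus_eq_char_poly:
  assumes A: "(A :: real mat) \<in> carrier_mat n n"
  shows "Determinant.det (x \<cdot>\<^sub>m 1\<^sub>m n - A) = poly (char_poly A) x"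
proof -
  have "- char_matrix A x = x \<cdot>\<^sub>m 1\<^sub>m n - A"
    using A by (intro eq_matI) (auto simp: char_matrix_def)
  then show ?thesis using char_poly_matrix[OF A, of x] by simp
qed

lemma positive_eigenvalue_is_max_root:
  assumes A: "A \<in> carrier_mat n n" and Apos: "\<And>i j. i < n \<Longrightarrow> j < n \<Longrightarrow> A $$ (i, j) > 0"
    and P: "positive_eigenvector A n u lam" and n: "n > 0"
  shows "Max {x. poly (char_poly A) x = 0} = lam"
proof (rule Max_eqI)
  have "char_poly A \<noteq> 0" using degree_monic_char_poly[OF A] by auto
  then show "finite {x. poly (char_poly A) x = 0}" by (rule poly_roots_finite)
  show "lam \<in> {x. poly (char_poly A) x = 0}"
    using positive_eigenvector_eigenvector[OF A P n] eigenvalue_root_char_poly[OF A]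
    by (auto simp: eigenvalue_def)
  fix x assume "x \<in> {x. poly (char_poly A) x = 0}"
  then have "eigenvalue A x" using eigenvalue_root_char_poly[OF A] by simp
  then obtain v where v: "v \<in> carrier_vec n" "v \<noteq> 0\<^sub>v n" "A *\<^sub>v v = x \<cdot>\<^sub>v v"
    unfolding eigenvalue_def eigenvector_def using A by auto
  have "\<bar>x\<bar> \<le> lam"
    by (rule eigenvalue_abs_le_positive_eigenvalue[OF A _ P v])
      (use Apos in \<open>auto intro: less_imp_le\<close>)
  then show "x \<le> lam" by simp
qed

lemma mat_erase_eigenvalue_abs_less:
  assumes A: "A \<in> carrier_mat n n" and Apos: "\<And>i j. i < n \<Longrightarrow> j < n \<Longrightarrow> A $$ (i, j) > 0"
    and P: "positive_eigenvector A n u lam" and i0: "i0 < n"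
    and v: "v \<in> carrier_vec n" "v \<noteq> 0\<^sub>v n" "mat_erase A i0 i0 *\<^sub>v v = x \<cdot>\<^sub>v v" and x: "x \<noteq> 0"
  shows "\<bar>x\<bar> < lam"
proof -
  let ?E = "mat_erase A i0 i0"
  have E: "?E \<in> carrier_mat n n" using A by simp
  have E_index: "?E $$ (i, j) = (if i = i0 \<or> j = i0 then 0 else A $$ (i, j))"
    if "i < n" "j < n" for i j
    using A that by (auto simp: mat_erase_def)
  obtain k where k: "k < n" "v $ k \<noteq> 0" using v(1,2) by (metis eq_vecI carrier_vecD index_zero_vec)
  have "x * v $ i0 = (?E *\<^sub>v v) $ i0" using v(1,3) i0 by simp
  also have "\<dots> = 0" using index_mult_mat_vec_sum[OF E v(1) i0] i0 by (simp add: E_index)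
  finally have vi0: "v $ i0 = 0" using x by simp
  show ?thesis
  proof (rule collatz_wielandt_lower_strict[OF A Apos P, of "\<lambda>j. \<bar>v $ j\<bar>" k i0])
    fix i assume i: "i < n"
    have "\<bar>x\<bar> * \<bar>v $ i\<bar> = \<bar>(?E *\<^sub>v v) $ i\<bar>" using v(1,3) i by (simp add: abs_mult)
    also have "\<dots> = \<bar>\<Sum>j<n. ?E $$ (i, j) * v $ j\<bar>" using index_mult_mat_vec_sum[OF E v(1) i] by simp
    also have "\<dots> \<le> (\<Sum>j<n. A $$ (i, j) * \<bar>v $ j\<bar>)"
      using Apos i by (intro order.trans[OF sum_abs] sum_mono)
        (auto simp: abs_mult E_index less_imp_le)
    finally show "\<bar>x\<bar> * \<bar>v $ i\<bar> \<le> (\<Sum>j<n. A $$ (i, j) * \<bar>v $ j\<bar>)" .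
  qed (use k i0 vi0 in auto)
qed

lemma poly_pos_if_no_root_beyond:
  fixes p :: "real poly"
  assumes lc: "lead_coeff p > 0" and no_root: "\<And>x. x \<ge> x0 \<Longrightarrow> poly p x \<noteq> 0"
  shows "poly p x0 > 0"
proof (rule ccontr)
  assume "\<not> poly p x0 > 0"
  obtain N where N: "\<And>x. x \<ge> N \<Longrightarrow> poly p x \<ge> lead_coeff p" using poly_pinfty_gt_lc[OF lc] by blast
  define y where "y = max x0 N"
  have "poly p y > 0" using N[of y] lc by (simp add: y_def)
  moreover have "x0 \<le> y" by (simp add: y_def)
  moreover have "continuous_on {x0..y} (poly p)" by (intro continuous_intros)
  ultimately obtain x where "x0 \<le> x" "poly p x = 0"
    using IVT'[of "poly p" x0 0 y] \<open>\<not> poly p x0 > 0\<close> by auto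
  with no_root show False by blast
qed

text \<open>The positive eigenvalue is a simple root of the characteristic polynomial: by the
  Jacobi-type formula \<open>x \<chi>\<^sub>A'(x) = \<Sum>\<^sub>i \<chi>\<^sub>A\<^sub>i(x)\<close> over the principal erasures \<open>A\<^sub>i\<close>, and each
  \<open>\<chi>\<^sub>A\<^sub>i\<close> is positive at \<open>lam\<close> since all real eigenvalues of \<open>A\<^sub>i\<close> are below \<open>lam\<close>.\<close>

lemma pderiv_char_poly_pos_at_positive_eigenvalue:
  assumes A: "A \<in> carrier_mat n n" and Apos: "\<And>i j. i < n \<Longrightarrow> j < n \<Longrightarrow> A $$ (i, j) > 0"
    and P: "positive_eigenvector A n u lam" and n: "n > 0"
  shows "poly (pderiv (char_poly A)) lam > 0"
proof -
  have lam: "lam > 0" by (rule positive_eigenvalue_pos[OF A Apos P n])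
  have erase_pos: "poly (char_poly (mat_erase A i i)) lam > 0" if i: "i < n" for i
  proof (rule poly_pos_if_no_root_beyond)
    have E: "mat_erase A i i \<in> carrier_mat n n" using A by simp
    show "lead_coeff (char_poly (mat_erase A i i)) > 0" using degree_monic_char_poly[OF E] by simp
    fix x assume x: "x \<ge> lam"
    show "poly (char_poly (mat_erase A i i)) x \<noteq> 0"
    proof
      assume "poly (char_poly (mat_erase A i i)) x = 0"
      then have "eigenvalue (mat_erase A i i) x" using eigenvalue_root_char_poly[OF E] by simp
      then obtain v where v: "v \<in> carrier_vec n" "v \<noteq> 0\<^sub>v n" "mat_erase A i i *\<^sub>v v = x \<cdot>\<^sub>v v"
        unfolding eigenvalue_def eigenvector_def using E by auto
      have "\<bar>x\<bar> < lam" using mat_erase_eigenvalue_abs_less[OF A Apos P i v] x lam by simp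
      with x show False by simp
    qed
  qed
  have "lam * poly (pderiv (char_poly A)) lam = poly (monom 1 1 * pderiv (char_poly A)) lam"
    by (simp add: poly_monom)
  also have "\<dots> = (\<Sum>i<n. poly (char_poly (mat_erase A i i)) lam)"
    unfolding pderiv_char_poly_mat_erase[OF A] by (simp add: poly_sum)
  also have "\<dots> > 0" using n erase_pos by (intro sum_pos) auto
  finally show ?thesis using lam by (simp add: zero_less_mult_iff)
qed

definition unit_simplex :: "(real^'n) set" where
  "unit_simplex = {x. (\<forall>i. 0 \<le> x $ i) \<and> (\<Sum>i\<in>UNIV. x $ i) = 1}"

lemma compact_unit_simplex: "compact unit_simplex"
proof -
  have "closed unit_simplex" unfolding unit_simplex_def
    by (intro closed_Collect_conj closed_Collect_all closed_Collect_le closed_Collect_eq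
        continuous_intros)
  moreover have "unit_simplex \<subseteq> cbox 0 1"
  proof
    fix x :: "real^'n" assume x: "x \<in> unit_simplex"
    have "x $ i \<le> 1" for i
      using member_le_sum[of i UNIV "\<lambda>i. x $ i"] x by (simp add: unit_simplex_def)
    with x show "x \<in> cbox 0 1" by (simp add: unit_simplex_def mem_box_cart)
  qed
  ultimately show ?thesis by (meson bounded_cbox bounded_subset compact_eq_bounded_closed)
qed

lemma convex_unit_simplex: "convex unit_simplex"
  unfolding convex_def unit_simplex_def
  by (auto simp: sum.distrib sum_distrib_left[symmetric] intro!: add_nonneg_nonneg mult_nonneg_nonneg)

lemma unit_simplex_nonempty: "(unit_simplex :: (real^'n) set) \<noteq> {}"
proof -
  have "(\<chi> i. 1 / real CARD('n)) \<in> (unit_simplex :: (real^'n) set)" by (simp add: unit_simplex_def)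
  then show ?thesis by blast
qed

lemma unit_simplex_pos_component: "x \<in> unit_simplex \<Longrightarrow> \<exists>j. x $ j > 0"
proof -
  assume x: "x \<in> unit_simplex"
  have "\<exists>j. x $ j \<noteq> 0"
  proof (rule ccontr)
    assume "\<not> (\<exists>j. x $ j \<noteq> 0)"
    with x show False by (simp add: unit_simplex_def)
  qed
  with x show ?thesis by (force simp: unit_simplex_def order.order_iff_strict)
qed

lemma mult_mat_vec_reindex:
  fixes x :: "real^'n" and \<iota> :: "'n \<Rightarrow> nat"
  assumes A: "A \<in> carrier_mat n n" and \<iota>: "bij_betw \<iota> UNIV {0..<n}"
  shows "(A *\<^sub>v vec n (\<lambda>k. x $ inv_into UNIV \<iota> k)) $ \<iota> i = (\<Sum>j\<in>UNIV. A $$ (\<iota> i, \<iota> j) * x $ j)"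
proof -
  have "\<iota> i < n" using bij_betw_apply[OF \<iota>] by simp
  then have "(A *\<^sub>v vec n (\<lambda>k. x $ inv_into UNIV \<iota> k)) $ \<iota> i
      = (\<Sum>j<n. A $$ (\<iota> i, j) * x $ inv_into UNIV \<iota> j)"
    by (subst index_mult_mat_vec_sum[OF A]) auto
  also have "\<dots> = (\<Sum>j\<in>UNIV. A $$ (\<iota> i, \<iota> j) * x $ j)"
    using sum.reindex_bij_betw[OF \<iota>, of "\<lambda>j. A $$ (\<iota> i, j) * x $ inv_into UNIV \<iota> j"]
      bij_betw_inv_into_left[OF \<iota>] by (simp add: lessThan_atLeast0)
  finally show ?thesis .
qed

text \<open>Brouwer's fixed point theorem for \<open>x \<mapsto> B x / \<Sum>\<^sub>i (B x)\<^sub>i\<close> on the simplex.\<close>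

lemma positive_kernel_fixpoint:
  fixes B :: "'n::finite \<Rightarrow> 'n \<Rightarrow> real"
  assumes Bpos: "\<And>i j. B i j > 0"
  obtains x :: "real^'n" and lam where "lam > 0" "\<And>i. x $ i > 0"
    "\<And>i. (\<Sum>j\<in>UNIV. B i j * x $ j) = lam * x $ i"
proof -
  let ?S = "unit_simplex :: (real^'n) set"
  define Y where "Y x i = (\<Sum>j\<in>UNIV. B i j * x $ j)" for x :: "real^'n" and i
  define s where "s x = (\<Sum>i\<in>UNIV. Y x i)" for x
  define f where "f x = (\<chi> i. Y x i / s x)" for x
  have Ypos: "Y x i > 0" if x: "x \<in> ?S" for x i
  proof -
    obtain j where "x $ j > 0" using unit_simplex_pos_component[OF x] by blast
    then show ?thesis unfolding Y_def using x Bpos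
      by (intro sum_pos2[of _ j]) (auto simp: unit_simplex_def less_imp_le)
  qed
  have spos: "s x > 0" if "x \<in> ?S" for x
    unfolding s_def using Ypos[OF that] by (intro sum_pos) auto
  have "continuous_on ?S f"
    using spos unfolding f_def s_def Y_def
    by (intro continuous_intros) (auto simp: less_imp_neq[symmetric])
  moreover have "f \<in> ?S \<rightarrow> ?S"
  proof
    fix x assume x: "x \<in> ?S"
    have "(\<Sum>i\<in>UNIV. Y x i / s x) = 1"
      using spos[OF x] by (simp add: s_def sum_divide_distrib[symmetric])
    then show "f x \<in> ?S" using Ypos[OF x] spos[OF x] by (simp add: unit_simplex_def f_def less_imp_le)
  qed
  ultimately obtain x where x: "x \<in> ?S" "f x = x"
    using brouwer[OF compact_unit_simplex convex_unit_simplex unit_simplex_nonempty] by blast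
  then have x_eq: "x $ i = Y x i / s x" for i by (metis f_def vec_lambda_beta)
  show ?thesis
  proof (rule that[of "s x" x])
    show "s x > 0" "x $ i > 0" for i using x_eq Ypos[OF x(1)] spos[OF x(1)] by simp_all
    show "(\<Sum>j\<in>UNIV. B i j * x $ j) = s x * x $ i" for i
      using x_eq[of i] spos[OF x(1)] by (simp add: Y_def)
  qed
qed

text \<open>The dimension is carried by a finite type so that the simplex lives in the Euclidean space
  \<open>real^'n\<close>.\<close>

lemma positive_eigenvector_exists:
  fixes A :: "real mat"
  assumes A: "A \<in> carrier_mat CARD('n::finite) CARD('n)"
    and Apos: "\<And>i j. i < CARD('n) \<Longrightarrow> j < CARD('n) \<Longrightarrow> A $$ (i, j) > 0"
  shows "\<exists>u lam. positive_eigenvector A CARD('n) u lam"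
proof -
  let ?n = "CARD('n)"
  obtain \<iota> :: "'n \<Rightarrow> nat" where \<iota>: "bij_betw \<iota> UNIV {0..<?n}"
    using ex_bij_betw_finite_nat[of "UNIV :: 'n set"] by auto
  have Bpos: "A $$ (\<iota> i, \<iota> j) > 0" for i j using Apos bij_betw_apply[OF \<iota>] by simp
  obtain x :: "real^'n" and lam where lam: "lam > 0" and x: "\<And>i. x $ i > 0"
    and eig: "\<And>i. (\<Sum>j\<in>UNIV. A $$ (\<iota> i, \<iota> j) * x $ j) = lam * x $ i"
    by (rule positive_kernel_fixpoint[of "\<lambda>i j. A $$ (\<iota> i, \<iota> j)", OF Bpos]) blast
  define u where "u = vec ?n (\<lambda>k. x $ inv_into UNIV \<iota> k)"
  have u: "u $ \<iota> i = x $ i" for i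
    using bij_betw_apply[OF \<iota>] bij_betw_inv_into_left[OF \<iota>] by (simp add: u_def)
  have "positive_eigenvector A ?n u lam" unfolding positive_eigenvector_def
  proof (intro conjI allI impI)
    show "u \<in> carrier_vec ?n" by (simp add: u_def)
    show "u $ k > 0" if "k < ?n" for k using that x by (simp add: u_def)
    show "A *\<^sub>v u = lam \<cdot>\<^sub>v u"
    proof (rule eq_vecI)
      fix k assume "k < dim_vec (lam \<cdot>\<^sub>v u)"
      then have "k \<in> range \<iota>" using \<iota> by (simp add: u_def bij_betw_def)
      then obtain i where k: "k = \<iota> i" by blast
      have "(A *\<^sub>v u) $ \<iota> i = lam * u $ \<iota> i"
        unfolding u_def mult_mat_vec_reindex[OF A \<iota>] eig by (simp add: u[unfolded u_def])
      then show "(A *\<^sub>v u) $ k = (lam \<cdot>\<^sub>v u) $ k" using k bij_betw_apply[OF \<iota>] by (simp add: u_def)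
    qed (use A in \<open>simp add: u_def\<close>)
  qed
  then show ?thesis by blast
qed

lemma positive_eigenvalue_perturbation:
  assumes A: "A \<in> carrier_mat n n" and B: "B \<in> carrier_mat n n"
    and Bnng: "\<And>i j. i < n \<Longrightarrow> j < n \<Longrightarrow> B $$ (i, j) \<ge> 0"
    and PA: "positive_eigenvector A n u \<alpha>" and PB: "positive_eigenvector B n w \<beta>" and n: "n > 0"
  shows "\<bar>\<beta> - \<alpha>\<bar> \<le> (\<Sum>i<n. \<Sum>j<n. \<bar>B $$ (i, j) - A $$ (i, j)\<bar> * (u $ j / u $ i))"
proof -
  define D where "D = (\<Sum>i<n. \<Sum>j<n. \<bar>B $$ (i, j) - A $$ (i, j)\<bar> * (u $ j / u $ i))"
  have upos: "\<And>j. j < n \<Longrightarrow> u $ j > 0" using PA by (simp add: positive_eigenvector_def)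
  have bound: "\<bar>(\<Sum>j<n. B $$ (i, j) * u $ j) - \<alpha> * u $ i\<bar> \<le> D * u $ i" if i: "i < n" for i
  proof -
    have "(\<Sum>j<n. B $$ (i, j) * u $ j) - \<alpha> * u $ i = (\<Sum>j<n. (B $$ (i, j) - A $$ (i, j)) * u $ j)"
      using positive_eigenvector_row[OF A PA i] by (simp add: sum_subtractf algebra_simps)
    also have "\<bar>\<dots>\<bar> \<le> (\<Sum>j<n. \<bar>B $$ (i, j) - A $$ (i, j)\<bar> * u $ j)"
      using upos by (intro order.trans[OF sum_abs] sum_mono) (simp add: abs_mult abs_of_pos)
    also have "\<dots> = (\<Sum>j<n. \<bar>B $$ (i, j) - A $$ (i, j)\<bar> * (u $ j / u $ i)) * u $ i"
      using upos[OF i] by (simp add: sum_distrib_right)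
    also have "\<dots> \<le> D * u $ i" unfolding D_def
      using i upos
      by (intro mult_right_mono sum_nonneg
          member_le_sum[where f="\<lambda>i. \<Sum>j<n. \<bar>B $$ (i, j) - A $$ (i, j)\<bar> * (u $ j / u $ i)"])
        (auto simp: zero_le_divide_iff less_imp_le)
    finally show ?thesis .
  qed
  have "\<alpha> - D \<le> \<beta>"
  proof (rule collatz_wielandt_lower[OF B Bnng PB, of "\<lambda>j. u $ j" 0])
    show "(\<alpha> - D) * u $ i \<le> (\<Sum>j<n. B $$ (i, j) * u $ j)" if "i < n" for i
      using bound[OF that] by (simp add: algebra_simps abs_le_iff)
  qed (use upos n in \<open>auto intro: less_imp_le\<close>)
  moreover have "\<beta> \<le> \<alpha> + D"
  proof (rule collatz_wielandt_upper[OF B Bnng PB n, of "\<lambda>j. u $ j"])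
    show "(\<Sum>j<n. B $$ (i, j) * u $ j) \<le> (\<alpha> + D) * u $ i" if "i < n" for i
      using bound[OF that] by (simp add: algebra_simps abs_le_iff)
  qed (use upos in auto)
  ultimately show ?thesis unfolding D_def by linarith
qed


section \<open>Implicit differentiation of a characteristic determinant\<close>

lemma implicit_difference_quotient_bound:
  fixes Gt Gx dt dx \<rho> :: real
  assumes dt: "dt \<noteq> 0" and Gx: "Gx \<noteq> 0" and \<rho>: "0 \<le> \<rho>" "\<rho> \<le> \<bar>Gx\<bar> / 2"
    and lin: "\<bar>Gt * dt + Gx * dx\<bar> \<le> \<rho> * (\<bar>dt\<bar> + \<bar>dx\<bar>)"
  shows "\<bar>dx / dt - (- Gt / Gx)\<bar> \<le> \<rho> * (2 + 2 * \<bar>Gt\<bar> / \<bar>Gx\<bar>) / \<bar>Gx\<bar>"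
proof -
  define q where "q = dx / dt"
  have dx: "dx = q * dt" using dt by (simp add: q_def)
  have "\<bar>Gt * dt + Gx * dx\<bar> = \<bar>Gt + Gx * q\<bar> * \<bar>dt\<bar>"
    by (simp add: dx algebra_simps flip: abs_mult)
  moreover have "\<rho> * (\<bar>dt\<bar> + \<bar>dx\<bar>) = \<rho> * (1 + \<bar>q\<bar>) * \<bar>dt\<bar>"
    by (simp add: dx abs_mult algebra_simps)
  ultimately have "\<bar>Gt + Gx * q\<bar> * \<bar>dt\<bar> \<le> \<rho> * (1 + \<bar>q\<bar>) * \<bar>dt\<bar>" using lin by linarith
  then have main: "\<bar>Gt + Gx * q\<bar> \<le> \<rho> * (1 + \<bar>q\<bar>)" using dt by simp
  have "\<bar>Gx\<bar> * \<bar>q\<bar> \<le> \<bar>Gt + Gx * q\<bar> + \<bar>Gt\<bar>"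
    using abs_triangle_ineq[of "Gt + Gx * q" "- Gt"] by (simp add: abs_mult)
  also have "\<dots> \<le> \<bar>Gt\<bar> + \<rho> * (1 + \<bar>q\<bar>)" using main by simp
  also have "\<dots> \<le> \<bar>Gt\<bar> + \<bar>Gx\<bar> / 2 * (1 + \<bar>q\<bar>)" using \<rho> by (intro add_left_mono mult_right_mono) auto
  finally have "\<bar>q\<bar> \<le> 1 + 2 * \<bar>Gt\<bar> / \<bar>Gx\<bar>" using Gx by (simp add: field_simps)
  have "\<bar>q - (- Gt / Gx)\<bar> = \<bar>Gt + Gx * q\<bar> / \<bar>Gx\<bar>"
    using Gx by (simp add: field_simps flip: abs_divide)
  also have "\<dots> \<le> \<rho> * (1 + \<bar>q\<bar>) / \<bar>Gx\<bar>" using main by (simp add: divide_right_mono)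
  also have "\<dots> \<le> \<rho> * (2 + 2 * \<bar>Gt\<bar> / \<bar>Gx\<bar>) / \<bar>Gx\<bar>"
    using \<open>\<bar>q\<bar> \<le> 1 + 2 * \<bar>Gt\<bar> / \<bar>Gx\<bar>\<close> \<rho>(1)
    by (intro divide_right_mono mult_left_mono) auto
  finally show ?thesis by (simp add: q_def)
qed

lemma implicit_function_has_real_derivative:
  fixes G :: "real \<times> real \<Rightarrow> real" and L :: "real \<Rightarrow> real"
  assumes dG: "(G has_derivative (\<lambda>(h, k). h * Gt + k * Gx)) (at (t0, L t0))"
    and Gx: "Gx \<noteq> 0" and cont: "isCont L t0"
    and zero: "\<forall>\<^sub>F t in nhds t0. G (t, L t) = 0"
  shows "(L has_real_derivative - Gt / Gx) (at t0)"
proof -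
  define z0 where "z0 = (t0, L t0)"
  define \<rho> where "\<rho> t = norm (G (t, L t) - G z0 - (\<lambda>(h, k). h * Gt + k * Gx) ((t, L t) - z0))
    / norm ((t, L t) - z0)" for t
  have "((\<lambda>t. (t, L t)) \<longlongrightarrow> z0) (at t0)"
    unfolding z0_def using cont by (intro tendsto_intros) (simp add: isCont_def)
  then have "filterlim (\<lambda>t. (t, L t)) (at z0) (at t0)"
    by (rule filterlim_atI) (auto simp: z0_def eventually_at_filter)
  moreover have "((\<lambda>z. norm (G z - G z0 - (\<lambda>(h, k). h * Gt + k * Gx) (z - z0)) / norm (z - z0))
      \<longlongrightarrow> 0) (at z0)"
    using dG unfolding z0_def has_derivative_iff_norm by blast
  ultimately have \<rho>0: "(\<rho> \<longlongrightarrow> 0) (at t0)" unfolding \<rho>_def by (rule filterlim_compose[rotated])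
  have G0: "G z0 = 0" using zero unfolding z0_def eventually_nhds by blast
  have zero_at: "\<forall>\<^sub>F t in at t0. t \<noteq> t0 \<and> G (t, L t) = 0"
    using zero by (auto simp: eventually_at_filter elim: eventually_mono)
  moreover have "\<forall>\<^sub>F t in at t0. \<rho> t < \<bar>Gx\<bar> / 2"
    using order_tendstoD(2)[OF \<rho>0, of "\<bar>Gx\<bar> / 2"] Gx by simp
  ultimately have "\<forall>\<^sub>F t in at t0.
      norm ((L t - L t0) / (t - t0) - (- Gt / Gx)) \<le> \<rho> t * (2 + 2 * \<bar>Gt\<bar> / \<bar>Gx\<bar>) / \<bar>Gx\<bar>"
  proof eventually_elim
    case (elim t)
    then have t: "t \<noteq> t0" "G (t, L t) = 0" "\<rho> t < \<bar>Gx\<bar> / 2" by auto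
    have norm_pos: "norm ((t, L t) - z0) > 0" using t(1) by (simp add: z0_def prod_eq_iff)
    have "\<bar>Gt * (t - t0) + Gx * (L t - L t0)\<bar> = \<rho> t * norm ((t, L t) - z0)"
      using t(2) G0 norm_pos by (simp add: \<rho>_def z0_def) (simp add: mult.commute abs_if)
    also have "\<dots> \<le> \<rho> t * (\<bar>t - t0\<bar> + \<bar>L t - L t0\<bar>)"
      using norm_Pair_le[of "t - t0" "L t - L t0"] by (intro mult_left_mono) (auto simp: z0_def \<rho>_def)
    finally have lin: "\<bar>Gt * (t - t0) + Gx * (L t - L t0)\<bar> \<le> \<rho> t * (\<bar>t - t0\<bar> + \<bar>L t - L t0\<bar>)" .
    show ?case unfolding real_norm_def
      by (rule implicit_difference_quotient_bound[OF _ Gx _ _ lin]) (use t in \<open>auto simp: \<rho>_def\<close>)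
  qed
  then have "((\<lambda>t. (L t - L t0) / (t - t0) - (- Gt / Gx)) \<longlongrightarrow> 0) (at t0)"
    by (rule Lim_null_comparison) (use Gx in \<open>auto intro!: tendsto_eq_intros \<rho>0\<close>)
  then show ?thesis unfolding has_field_derivative_iff by (rule LIM_zero_cancel)
qed

definition char_entry :: "(nat \<Rightarrow> nat \<Rightarrow> real \<Rightarrow> real) \<Rightarrow> (nat \<Rightarrow> nat) \<Rightarrow> nat \<Rightarrow> real \<times> real \<Rightarrow> real" where
  "char_entry e p i z = (if i = p i then snd z else 0) - e i (p i) (fst z)"

definition char_det :: "nat \<Rightarrow> (nat \<Rightarrow> nat \<Rightarrow> real \<Rightarrow> real) \<Rightarrow> real \<times> real \<Rightarrow> real" where
  "char_det n e z = (\<Sum>p | p permutes {0..<n}. signof p * (\<Prod>i<n. char_entry e p i z))"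

definition char_det_dt ::
    "nat \<Rightarrow> (nat \<Rightarrow> nat \<Rightarrow> real \<Rightarrow> real) \<Rightarrow> (nat \<Rightarrow> nat \<Rightarrow> real \<Rightarrow> real) \<Rightarrow> real \<times> real \<Rightarrow> real" where
  "char_det_dt n e e' z = (\<Sum>p | p permutes {0..<n}. signof p *
     (\<Sum>i<n. - e' i (p i) (fst z) * (\<Prod>j\<in>{..<n} - {i}. char_entry e p j z)))"

definition char_det_dx :: "nat \<Rightarrow> (nat \<Rightarrow> nat \<Rightarrow> real \<Rightarrow> real) \<Rightarrow> real \<times> real \<Rightarrow> real" where
  "char_det_dx n e z = (\<Sum>p | p permutes {0..<n}. signof p *
     (\<Sum>i<n. (if i = p i then 1 else 0) * (\<Prod>j\<in>{..<n} - {i}. char_entry e p j z)))"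

lemma finite_permutations_atLeast0: "finite {p. p permutes {0..<n :: nat}}"
  by (rule finite_permutations) simp

lemma char_entry_has_derivative:
  assumes "\<And>i j. (e i j has_real_derivative e' i j (fst z)) (at (fst z))"
  shows "(char_entry e p i has_derivative
    (\<lambda>hk. fst hk * - e' i (p i) (fst z) + snd hk * (if i = p i then 1 else 0))) (at z)"
proof -
  have diag: "((\<lambda>z. if i = p i then snd z else 0) has_derivative
      (\<lambda>hk. if i = p i then snd hk else 0)) (at z)"
    by (cases "i = p i") (auto intro: has_derivative_snd[OF has_derivative_ident])
  have entry: "((\<lambda>z. e i (p i) (fst z)) has_derivative (\<lambda>hk. e' i (p i) (fst z) * fst hk)) (at z)"
    using has_derivative_compose[OF has_derivative_fst[OF has_derivative_ident]
        assms[of i "p i", unfolded has_field_derivative_def]]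
    by simp
  have "(char_entry e p i has_derivative
      (\<lambda>hk. (if i = p i then snd hk else 0) - e' i (p i) (fst z) * fst hk)) (at z)"
    unfolding char_entry_def[abs_def] by (rule has_derivative_diff[OF diag entry])
  then show ?thesis by (rule has_derivative_eq_rhs) (auto simp: fun_eq_iff)
qed

lemma char_det_has_derivative:
  assumes "\<And>i j. (e i j has_real_derivative e' i j (fst z)) (at (fst z))"
  shows "(char_det n e has_derivative (\<lambda>(h, k). h * char_det_dt n e e' z + k * char_det_dx n e z))
    (at z)"
  unfolding char_det_def[abs_def]
  by (rule has_derivative_eq_rhs[OF has_derivative_sum[OF has_derivative_mult_right[OF
        has_derivative_prod[OF char_entry_has_derivative[where e=e and e'=e' and z=z, OF assms]]]]])
    (auto simp: fun_eq_iff char_det_dt_def char_det_dx_def sum.distrib sum_distrib_left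
      ring_distribs mult.assoc mult.left_commute sum_subtractf sum_negf)

lemma differentiable_prod:
  fixes f :: "'i \<Rightarrow> 'a::real_normed_vector \<Rightarrow> real"
  assumes "\<And>i. i \<in> I \<Longrightarrow> f i differentiable (at x)"
  shows "(\<lambda>x. \<Prod>i\<in>I. f i x) differentiable (at x)"
proof -
  obtain D where "\<forall>i\<in>I. (f i has_derivative D i) (at x)"
    using assms unfolding differentiable_def by metis
  then show ?thesis by (intro differentiableI[OF has_derivative_prod]) auto
qed

lemma char_det_partials_differentiable:
  assumes e: "\<And>i j. (e i j has_real_derivative e' i j (fst z)) (at (fst z))"
    and e': "\<And>i j. e' i j differentiable (at (fst z))"
  shows "char_det_dt n e e' differentiable (at z)" "char_det_dx n e differentiable (at z)"
proof -
  have entry: "char_entry e p j differentiable (at z)" for p j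
    using char_entry_has_derivative[where e=e and e'=e' and z=z, OF e] by (rule differentiableI)
  have "(\<lambda>z. e' i j (fst z)) differentiable (at z)" for i j
    by (rule differentiable_compose[of "e' i j" fst z, OF e'])
      (rule differentiableI[OF has_derivative_fst[OF has_derivative_ident]])
  then show "char_det_dt n e e' differentiable (at z)" "char_det_dx n e differentiable (at z)"
    unfolding char_det_dt_def[abs_def] char_det_dx_def[abs_def]
    by (intro differentiable_sum[OF finite_permutations_atLeast0] ballI differentiable_mult
        differentiable_const differentiable_sum differentiable_minus differentiable_prod entry; simp)+
qed

lemma char_det_eq_det:
  assumes "A \<in> carrier_mat n n" and "\<And>i j. i < n \<Longrightarrow> j < n \<Longrightarrow> A $$ (i, j) = e i j t"
  shows "Determinant.det (x \<cdot>\<^sub>m 1\<^sub>m n - A) = char_det n e (t, x)"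
proof -
  have c: "x \<cdot>\<^sub>m 1\<^sub>m n - A \<in> carrier_mat n n" using assms(1) by auto
  show ?thesis unfolding det_def'[OF c] char_det_def lessThan_atLeast0
  proof (intro sum.cong refl arg_cong2[where f="(*)"] prod.cong)
    fix p i assume p: "p \<in> {p. p permutes {0..<n}}" and i: "i \<in> {0..<n}"
    have "p i < n" using permutes_in_image[of p "{0..<n}" i] p i by auto
    then show "(x \<cdot>\<^sub>m 1\<^sub>m n - A) $$ (i, p i) = char_entry e p i (t, x)"
      using i assms by (simp add: char_entry_def)
  qed
qed

section \<open>Growth of cyclic sums of a positive kernel\<close>

lemma sum_PiE_insert:
  assumes "x \<notin> A"
  shows "sum F (Pi\<^sub>E (insert x A) T) = (\<Sum>y\<in>T x. \<Sum>f\<in>Pi\<^sub>E A T. F (f(x := y)))"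
proof -
  have "sum F (Pi\<^sub>E (insert x A) T) = sum (F \<circ> (\<lambda>(y, g). g(x := y))) (T x \<times> Pi\<^sub>E A T)"
    unfolding PiE_insert_eq by (rule sum.reindex[OF inj_combinator[OF assms]])
  then show ?thesis by (simp add: sum.cartesian_product split_def)
qed

lemma sum_paths_eigenvector:
  fixes g :: "'a \<Rightarrow> 'a \<Rightarrow> real" and w :: "'a \<Rightarrow> real"
  assumes ev: "\<And>k. k \<in> S \<Longrightarrow> (\<Sum>l\<in>S. g k l * w l) = lam * w k"
  shows "(\<Sum>ks\<in>Pi\<^sub>E {0..<Suc n} (\<lambda>_. S). (\<Prod>m<n. g (ks m) (ks (Suc m))) * w (ks n))
     = lam ^ n * (\<Sum>k\<in>S. w k)"
proof (induction n)
  case 0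
  have "{0..<Suc 0} = insert 0 {}" by auto
  then show ?case by (simp add: sum_PiE_insert)
next
  case (Suc n)
  have I: "{0..<Suc (Suc n)} = insert (Suc n) {0..<Suc n}" by auto
  have "(\<Sum>ks\<in>Pi\<^sub>E {0..<Suc (Suc n)} (\<lambda>_. S). (\<Prod>m<Suc n. g (ks m) (ks (Suc m))) * w (ks (Suc n)))
    = (\<Sum>y\<in>S. \<Sum>f\<in>Pi\<^sub>E {0..<Suc n} (\<lambda>_. S). (\<Prod>m<n. g (f m) (f (Suc m))) * (g (f n) y * w y))"
    unfolding I by (subst sum_PiE_insert) (auto simp: prod.lessThan_Suc intro!: sum.cong prod.cong)
  also have "\<dots> = (\<Sum>f\<in>Pi\<^sub>E {0..<Suc n} (\<lambda>_. S).
      (\<Prod>m<n. g (f m) (f (Suc m))) * (\<Sum>y\<in>S. g (f n) y * w y))"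
    by (simp add: sum.swap[of _ S] sum_distrib_left)
  also have "\<dots> = (\<Sum>f\<in>Pi\<^sub>E {0..<Suc n} (\<lambda>_. S). lam * ((\<Prod>m<n. g (f m) (f (Suc m))) * w (f n)))"
    by (intro sum.cong refl) (auto simp: ev PiE_def Pi_def)
  also have "\<dots> = lam ^ Suc n * (\<Sum>k\<in>S. w k)" by (simp add: sum_distrib_left[symmetric] Suc)
  finally show ?case .
qed

lemma kernel_ratio_bounds:
  fixes g :: "'a \<Rightarrow> 'a \<Rightarrow> real" and w :: "'a \<Rightarrow> real"
  assumes fin: "finite S" "S \<noteq> {}"
    and gpos: "\<And>k l. k \<in> S \<Longrightarrow> l \<in> S \<Longrightarrow> g k l > 0"
    and wpos: "\<And>k. k \<in> S \<Longrightarrow> w k > 0"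
  obtains c C where "c > 0" "C > 0" "\<And>k l. k \<in> S \<Longrightarrow> l \<in> S \<Longrightarrow> c * w k \<le> g k l \<and> g k l \<le> C * w k"
proof -
  let ?R = "(\<lambda>(k, l). g k l / w k) ` (S \<times> S)"
  have R: "finite ?R" "?R \<noteq> {}" and R_pos: "\<And>r. r \<in> ?R \<Longrightarrow> r > 0"
    using fin gpos wpos by auto
  show ?thesis
  proof (rule that[of "Min ?R" "Max ?R"])
    show "Min ?R > 0" "Max ?R > 0" using R_pos Min_in[OF R] Max_in[OF R] by auto
    fix k l assume kl: "k \<in> S" "l \<in> S"
    then have "g k l / w k \<in> ?R" by force
    then have "Min ?R \<le> g k l / w k" "g k l / w k \<le> Max ?R" using R(1) by auto
    then show "Min ?R * w k \<le> g k l \<and> g k l \<le> Max ?R * w k"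
      using wpos[OF kl(1)] by (simp add: field_simps)
  qed
qed

lemma prod_cyclic_lessThan_Suc:
  "(\<Prod>m<Suc n. g (ks m) (ks ((m + 1) mod Suc n))) = (\<Prod>m<n. g (ks m) (ks (Suc m))) * g (ks n) (ks 0)"
proof -
  have "(\<Prod>m<n. g (ks m) (ks ((m + 1) mod Suc n))) = (\<Prod>m<n. g (ks m) (ks (Suc m)))"
    by (intro prod.cong) auto
  then show ?thesis by (simp add: prod.lessThan_Suc)
qed

text \<open>Closing a path \<open>k\<^sub>0, \<dots>, k\<^sub>n\<close> into a cycle multiplies its weight by \<open>g k\<^sub>n k\<^sub>0\<close>, which is
  comparable to \<open>w k\<^sub>n\<close>; hence the cyclic sums grow like \<open>lam\<^sup>n\<close>.\<close>

lemma cyclic_sum_geometric_bounds: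
  fixes g :: "'a \<Rightarrow> 'a \<Rightarrow> real" and w :: "'a \<Rightarrow> real"
  assumes fin: "finite S" "S \<noteq> {}"
    and gpos: "\<And>k l. k \<in> S \<Longrightarrow> l \<in> S \<Longrightarrow> g k l > 0"
    and wpos: "\<And>k. k \<in> S \<Longrightarrow> w k > 0"
    and ev: "\<And>k. k \<in> S \<Longrightarrow> (\<Sum>l\<in>S. g k l * w l) = lam * w k"
  obtains c C where "c > 0" "C > 0"
    "\<And>n. c * lam ^ n \<le> (\<Sum>ks\<in>Pi\<^sub>E {0..<Suc n} (\<lambda>_. S). \<Prod>m<Suc n. g (ks m) (ks ((m + 1) mod Suc n)))"
    "\<And>n. (\<Sum>ks\<in>Pi\<^sub>E {0..<Suc n} (\<lambda>_. S). \<Prod>m<Suc n. g (ks m) (ks ((m + 1) mod Suc n))) \<le> C * lam ^ n"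
proof -
  obtain \<kappa> K where \<kappa>: "\<kappa> > 0" and K: "K > 0"
    and bounds: "\<And>k l. k \<in> S \<Longrightarrow> l \<in> S \<Longrightarrow> \<kappa> * w k \<le> g k l \<and> g k l \<le> K * w k"
    using kernel_ratio_bounds[where g = g and w = w, OF fin gpos wpos] by blast
  define W where "W = (\<Sum>k\<in>S. w k)"
  have W: "W > 0" unfolding W_def using fin wpos by (intro sum_pos) auto
  define P where "P n ks = (\<Prod>m<n. g (ks m) (ks (Suc m)))" for n ks
  have P: "P n ks \<ge> 0" if "ks \<in> Pi\<^sub>E {0..<Suc n} (\<lambda>_. S)" for n ks
    unfolding P_def using that gpos by (intro prod_nonneg) (auto simp: PiE_def Pi_def less_imp_le)
  have paths: "(\<Sum>ks\<in>Pi\<^sub>E {0..<Suc n} (\<lambda>_. S). P n ks * w (ks n)) = lam ^ n * W" for n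
    unfolding P_def W_def by (rule sum_paths_eigenvector[OF ev])
  show ?thesis
  proof
    show "\<kappa> * W > 0" "K * W > 0" using \<kappa> K W by simp_all
    fix n
    have "\<kappa> * W * lam ^ n = (\<Sum>ks\<in>Pi\<^sub>E {0..<Suc n} (\<lambda>_. S). P n ks * (\<kappa> * w (ks n)))"
      by (simp add: paths sum_distrib_left[symmetric] mult.left_commute)
    also have "\<dots> \<le> (\<Sum>ks\<in>Pi\<^sub>E {0..<Suc n} (\<lambda>_. S). P n ks * g (ks n) (ks 0))"
      using bounds P by (intro sum_mono mult_left_mono) (auto simp: PiE_def Pi_def)
    finally show "\<kappa> * W * lam ^ n
        \<le> (\<Sum>ks\<in>Pi\<^sub>E {0..<Suc n} (\<lambda>_. S). \<Prod>m<Suc n. g (ks m) (ks ((m + 1) mod Suc n)))"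
      by (simp only: prod_cyclic_lessThan_Suc P_def)
    have "(\<Sum>ks\<in>Pi\<^sub>E {0..<Suc n} (\<lambda>_. S). P n ks * g (ks n) (ks 0))
        \<le> (\<Sum>ks\<in>Pi\<^sub>E {0..<Suc n} (\<lambda>_. S). P n ks * (K * w (ks n)))"
      using bounds P by (intro sum_mono mult_left_mono) (auto simp: PiE_def Pi_def)
    also have "\<dots> = K * W * lam ^ n"
      by (simp add: paths sum_distrib_left[symmetric] mult.left_commute)
    finally show "(\<Sum>ks\<in>Pi\<^sub>E {0..<Suc n} (\<lambda>_. S). \<Prod>m<Suc n. g (ks m) (ks ((m + 1) mod Suc n)))
        \<le> K * W * lam ^ n"
      by (simp only: prod_cyclic_lessThan_Suc P_def)
  qed
qed

lemma affine_div_Suc_tendsto: "(\<lambda>n. (c + real n * l) / real (Suc n)) \<longlonglongrightarrow> l"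
proof -
  have "(\<lambda>n. l + (c - l) * inverse (real (Suc n))) \<longlonglongrightarrow> l + (c - l) * 0"
    by (intro tendsto_intros LIMSEQ_inverse_real_of_nat)
  moreover have "(c + real n * l) / real (Suc n) = l + (c - l) * inverse (real (Suc n))" for n
    by (simp add: field_simps)
  ultimately show ?thesis by simp
qed

lemma ln_div_tendsto_of_geometric_bounds:
  fixes Z :: "nat \<Rightarrow> real"
  assumes pos: "c > 0" "C > 0" "lam > 0"
    and bounds: "\<And>n. c * lam ^ n \<le> Z (Suc n)" "\<And>n. Z (Suc n) \<le> C * lam ^ n"
  shows "(\<lambda>M. ln (Z M) / real M) \<longlonglongrightarrow> ln lam"
proof -
  have ln_bounds: "ln c + real n * ln lam \<le> ln (Z (Suc n))"
    "ln (Z (Suc n)) \<le> ln C + real n * ln lam" for n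
  proof -
    have pos_n: "0 < c * lam ^ n" "0 < C * lam ^ n" using pos by simp_all
    then have "ln (c * lam ^ n) \<le> ln (Z (Suc n))" "ln (Z (Suc n)) \<le> ln (C * lam ^ n)"
      using bounds[of n] by simp_all
    moreover have "ln (c * lam ^ n) = ln c + real n * ln lam"
      "ln (C * lam ^ n) = ln C + real n * ln lam"
      using pos by (simp_all add: ln_mult ln_realpow)
    ultimately show "ln c + real n * ln lam \<le> ln (Z (Suc n))"
      "ln (Z (Suc n)) \<le> ln C + real n * ln lam"
      by simp_all
  qed
  have "(\<lambda>n. ln (Z (Suc n)) / real (Suc n)) \<longlonglongrightarrow> ln lam"
  proof (rule tendsto_sandwich[OF _ _ affine_div_Suc_tendsto affine_div_Suc_tendsto])
    show "\<forall>\<^sub>F n in sequentially. (ln c + real n * ln lam) / real (Suc n) \<le> ln (Z (Suc n)) / real (Suc n)"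
      "\<forall>\<^sub>F n in sequentially. ln (Z (Suc n)) / real (Suc n) \<le> (ln C + real n * ln lam) / real (Suc n)"
      using ln_bounds by (auto intro!: always_eventually divide_right_mono)
  qed
  then show ?thesis by (rule LIMSEQ_imp_Suc)
qed

lemma transfer_matrix_ln_limit:
  fixes g :: "'a \<Rightarrow> 'a \<Rightarrow> real" and w :: "'a \<Rightarrow> real" and Z :: "nat \<Rightarrow> real"
  assumes fin: "finite S" "S \<noteq> {}"
    and gpos: "\<And>k l. k \<in> S \<Longrightarrow> l \<in> S \<Longrightarrow> g k l > 0"
    and wpos: "\<And>k. k \<in> S \<Longrightarrow> w k > 0"
    and ev: "\<And>k. k \<in> S \<Longrightarrow> (\<Sum>l\<in>S. g k l * w l) = lam * w k"
    and Z: "\<And>M. M > 0 \<Longrightarrow> Z M = (\<Sum>ks\<in>Pi\<^sub>E {0..<M} (\<lambda>_. S). \<Prod>m<M. g (ks m) (ks ((m + 1) mod M)))"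
  shows "(\<lambda>M. ln (Z M) / real M) \<longlonglongrightarrow> ln lam"
proof -
  obtain k where k: "k \<in> S" using fin(2) by blast
  have "0 < (\<Sum>l\<in>S. g k l * w l)" using fin k gpos wpos by (intro sum_pos) auto
  then have "lam > 0" using ev[OF k] wpos[OF k] by (simp add: zero_less_mult_iff)
  moreover obtain c C where "c > 0" "C > 0"
    "\<And>n. c * lam ^ n \<le> Z (Suc n)" "\<And>n. Z (Suc n) \<le> C * lam ^ n"
    using cyclic_sum_geometric_bounds[OF fin gpos wpos ev] Z[OF zero_less_Suc] by metis
  ultimately show ?thesis by (intro ln_div_tendsto_of_geometric_bounds)
qed

section \<open>Thermodynamic identities\<close>

lemma thermodynamic_derivatives:
  fixes F \<phi> \<phi>' :: "real \<Rightarrow> real"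
  assumes F: "\<And>t. t > 0 \<Longrightarrow> F t = - kB * t * \<phi> t"
    and d\<phi>: "\<And>t. t > 0 \<Longrightarrow> (\<phi> has_real_derivative \<phi>' t) (at t)"
    and d\<phi>': "\<phi>' differentiable (at T)" and T: "T > 0"
  shows "- T\<^sup>2 * deriv (\<lambda>t. F t / t) T = kB * T\<^sup>2 * deriv \<phi> T"
    and "deriv (\<lambda>s. - s\<^sup>2 * deriv (\<lambda>t. F t / t) s) T
      = 2 * kB * T * deriv \<phi> T + kB * T\<^sup>2 * deriv (deriv \<phi>) T"
proof -
  have near_pos: "\<forall>\<^sub>F s in nhds t. s > 0" if "t > 0" for t :: real
    using eventually_nhds_in_open[of "{0<..}" t] that by simp
  have deriv_\<phi>: "deriv \<phi> t = \<phi>' t" if "t > 0" for t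
    using d\<phi>[OF that] by (rule DERIV_imp_deriv)
  have U: "- s\<^sup>2 * deriv (\<lambda>t. F t / t) s = kB * s\<^sup>2 * \<phi>' s" if s: "s > 0" for s
  proof -
    have "deriv (\<lambda>t. F t / t) s = deriv (\<lambda>t. - kB * \<phi> t) s"
      by (rule deriv_cong_ev[OF eventually_mono[OF near_pos[OF s]] refl]) (simp add: F)
    also have "\<dots> = - kB * \<phi>' s" by (rule DERIV_imp_deriv[OF DERIV_cmult[OF d\<phi>[OF s]]])
    finally show ?thesis by simp
  qed
  then show "- T\<^sup>2 * deriv (\<lambda>t. F t / t) T = kB * T\<^sup>2 * deriv \<phi> T"
    using T by (simp add: deriv_\<phi>)
  obtain \<phi>'' where d\<phi>'': "(\<phi>' has_real_derivative \<phi>'') (at T)"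
    using d\<phi>' by (auto simp: real_differentiable_def)
  have "deriv (\<lambda>s. - s\<^sup>2 * deriv (\<lambda>t. F t / t) s) T = deriv (\<lambda>s. kB * s\<^sup>2 * \<phi>' s) T"
    by (rule deriv_cong_ev[OF eventually_mono[OF near_pos[OF T]] refl]) (use U in simp)
  also have "\<dots> = kB * (2 * T) * \<phi>' T + kB * T\<^sup>2 * \<phi>''"
    by (rule DERIV_imp_deriv) (auto intro!: derivative_eq_intros d\<phi>'')
  also have "\<phi>'' = deriv (deriv \<phi>) T"
  proof -
    have "deriv (deriv \<phi>) T = deriv \<phi>' T"
      by (rule deriv_cong_ev[OF eventually_mono[OF near_pos[OF T]] refl]) (simp add: deriv_\<phi>)
    then show ?thesis using DERIV_imp_deriv[OF d\<phi>''] by simp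
  qed
  finally show "deriv (\<lambda>s. - s\<^sup>2 * deriv (\<lambda>t. F t / t) s) T
      = 2 * kB * T * deriv \<phi> T + kB * T\<^sup>2 * deriv (deriv \<phi>) T"
    using T by (simp add: deriv_\<phi>)
qed

section \<open>Symmetries of the cube energy\<close>

lemma snd_lt_4_if_in_Cube: "p \<in> Cube \<Longrightarrow> snd p < 4"
  by (auto simp: Cube_def a_def b_def)

lemma Phi_subset_Cube_even_card:
  assumes "\<alpha> \<in> Phi"
  shows "\<alpha> \<subseteq> Cube" "even (card \<alpha>)"
proof -
  have Phi2: "\<beta> \<subseteq> Cube \<and> card \<beta> = 2" if "\<beta> \<in> Phi2" for \<beta>
    using that by (auto simp: Phi2_def Cube_def a_def b_def)
  have Phi4: "\<beta> \<subseteq> Cube \<and> card \<beta> = 4" if "\<beta> \<in> Phi4" for \<beta>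
    using that unfolding Phi4_def Cube_def a_def b_def by (elim insertE; simp)
  have Cube: "finite Cube" "card Cube = 8" by (simp_all add: Cube_def a_def b_def)
  consider "\<alpha> \<in> Phi2" | "\<alpha> \<in> Phi4" | \<beta> where "\<beta> \<in> Phi2" "\<alpha> = Cube - \<beta>" | "\<alpha> = Cube"
    using assms unfolding Phi_def Phi6_def Phi8_def by blast
  then have "\<alpha> \<subseteq> Cube \<and> even (card \<alpha>)"
  proof cases
    case (3 \<beta>)
    then have "\<beta> \<subseteq> Cube" "card \<beta> = 2" using Phi2 by auto
    with 3 Cube show ?thesis by (auto simp: card_Diff_subset finite_subset)
  qed (use Phi2 Phi4 Cube in auto)
  then show "\<alpha> \<subseteq> Cube" "even (card \<alpha>)" by auto
qed

lemma bij_betw_rot_Cube: "bij_betw rot Cube Cube"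
  unfolding bij_betw_def inj_on_def Cube_def a_def b_def rot_def by auto

lemma bij_betw_funpow_rot_Cube: "bij_betw (rot ^^ r) Cube Cube"
  by (rule bij_betw_funpow[OF bij_betw_rot_Cube])

lemma funpow_rot_4:
  assumes "p \<in> Cube"
  shows "(rot ^^ 4) p = p"
proof -
  have "(rot ^^ 4) p = rot (rot (rot (rot p)))" by (simp add: numeral_eq_Suc)
  then show ?thesis using assms by (auto simp: Cube_def a_def b_def rot_def)
qed

lemma funpow_rot_image_Phi: "\<alpha> \<in> Phi \<Longrightarrow> (rot ^^ r) ` \<alpha> \<subseteq> Cube"
  using Phi_subset_Cube_even_card(1) bij_betw_funpow_rot_Cube[of r] by (auto simp: bij_betw_def)

definition site_spin :: "(nat \<Rightarrow> real) \<Rightarrow> (nat \<Rightarrow> real) \<Rightarrow> pos \<Rightarrow> real" where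
  "site_spin s s' p = (if fst p = 0 then s (snd p) else s' (snd p))"

lemma cube_energy_site_spin:
  "cube_energy J s s' = - (\<Sum>\<alpha>\<in>Phi. J \<alpha> * (\<Sum>r<4. \<Prod>p\<in>(rot ^^ r) ` \<alpha>. site_spin s s' p))"
  unfolding cube_energy_def site_spin_def ..

lemma cube_energy_cong:
  assumes "\<And>i. i < 4 \<Longrightarrow> s i = t i" "\<And>i. i < 4 \<Longrightarrow> s' i = t' i"
  shows "cube_energy J s s' = cube_energy J t t'"
proof -
  have spin_eq: "site_spin s s' p = site_spin t t' p" if "\<alpha> \<in> Phi" "p \<in> (rot ^^ r) ` \<alpha>" for \<alpha> p r
  proof -
    have "snd p < 4" using that funpow_rot_image_Phi snd_lt_4_if_in_Cube by blast
    then show ?thesis by (simp add: site_spin_def assms)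
  qed
  show ?thesis unfolding cube_energy_site_spin
    by (intro arg_cong[where f=uminus] sum.cong refl arg_cong2[where f="(*)"] prod.cong spin_eq)
qed

lemma sum_lessThan_shift_periodic:
  fixes F :: "nat \<Rightarrow> 'a::cancel_comm_monoid_add"
  assumes "F n = F 0"
  shows "(\<Sum>r<n. F (Suc r)) = (\<Sum>r<n. F r)"
  using sum.lessThan_Suc_shift[of F n] sum.lessThan_Suc[of F n] assms by (simp add: add.commute)

lemma cube_energy_rotate:
  "cube_energy J (\<lambda>i. s ((i + 1) mod 4)) (\<lambda>i. s' ((i + 1) mod 4)) = cube_energy J s s'"
proof -
  have shift: "site_spin (\<lambda>i. s ((i + 1) mod 4)) (\<lambda>i. s' ((i + 1) mod 4))
      = (\<lambda>p. site_spin s s' (rot p))"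
    by (simp add: fun_eq_iff site_spin_def rot_def)
  have "(\<Sum>r<4. \<Prod>p\<in>(rot ^^ r) ` \<alpha>. site_spin s s' (rot p))
      = (\<Sum>r<4. \<Prod>p\<in>(rot ^^ r) ` \<alpha>. site_spin s s' p)"
    if \<alpha>: "\<alpha> \<in> Phi" for \<alpha>
  proof -
    define F where "F r = (\<Prod>p\<in>(rot ^^ r) ` \<alpha>. site_spin s s' p)" for r
    have step: "(\<Prod>p\<in>(rot ^^ r) ` \<alpha>. site_spin s s' (rot p)) = F (Suc r)" for r
    proof -
      have "inj_on rot ((rot ^^ r) ` \<alpha>)"
        using bij_betw_rot_Cube funpow_rot_image_Phi[OF \<alpha>]
        by (auto simp: bij_betw_def intro: inj_on_subset)
      then have "(\<Prod>p\<in>(rot ^^ r) ` \<alpha>. site_spin s s' (rot p))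
          = (\<Prod>p\<in>rot ` (rot ^^ r) ` \<alpha>. site_spin s s' p)"
        by (simp add: prod.reindex)
      then show ?thesis by (simp add: F_def image_comp)
    qed
    have "(rot ^^ 4) ` \<alpha> = \<alpha>"
    proof -
      have "(rot ^^ 4) p = p" if "p \<in> \<alpha>" for p
        using that Phi_subset_Cube_even_card(1)[OF \<alpha>] funpow_rot_4 by blast
      then show ?thesis by (metis image_cong image_ident)
    qed
    then have "F 4 = F 0" by (simp add: F_def)
    then have "(\<Sum>r<4. F (Suc r)) = (\<Sum>r<4. F r)" by (rule sum_lessThan_shift_periodic)
    then show ?thesis by (simp only: step) (simp add: F_def)
  qed
  then show ?thesis unfolding cube_energy_site_spin shift
    by (intro arg_cong[where f=uminus] sum.cong) auto
qed

lemma cube_energy_uminus: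
  "cube_energy J (\<lambda>i. - s i) (\<lambda>i. - s' i) = cube_energy J s s'"
proof -
  have neg: "site_spin (\<lambda>i. - s i) (\<lambda>i. - s' i) = (\<lambda>p. - site_spin s s' p)"
    by (simp add: fun_eq_iff site_spin_def)
  have "(\<Prod>p\<in>(rot ^^ r) ` \<alpha>. - site_spin s s' p) = (\<Prod>p\<in>(rot ^^ r) ` \<alpha>. site_spin s s' p)"
    if \<alpha>: "\<alpha> \<in> Phi" for \<alpha> r
  proof -
    have "inj_on (rot ^^ r) \<alpha>"
      using bij_betw_funpow_rot_Cube Phi_subset_Cube_even_card(1)[OF \<alpha>]
      by (auto simp: bij_betw_def intro: inj_on_subset)
    then have "even (card ((rot ^^ r) ` \<alpha>))"
      using Phi_subset_Cube_even_card(2)[OF \<alpha>] by (simp add: card_image)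
    then show ?thesis by (simp add: prod_uminus)
  qed
  then show ?thesis unfolding cube_energy_site_spin neg
    by (intro arg_cong[where f=uminus] sum.cong) auto
qed

section \<open>Lumping the transfer matrix\<close>

lemma atLeastAtMost_1_16: "{1..16::nat} = {1, 2, 3, 4, 5, 6, 7, 8, 9, 10, 11, 12, 13, 14, 15, 16}"
  by (simp add: eval_nat_numeral atLeastAtMostSuc_conv insert_commute)

lemma less_4_cases: "(i::nat) < 4 \<Longrightarrow> i \<in> {0, 1, 2, 3}"
  by auto

definition rotate_state :: "nat \<Rightarrow> nat" where
  "rotate_state k = 1 + ((k - 1) div 2 + ((k - 1) mod 2) * 8)"

definition flip_state :: "nat \<Rightarrow> nat" where
  "flip_state k = 17 - k"

lemma state_rotate_state: "k \<in> {1..16} \<Longrightarrow> i < 4 \<Longrightarrow> state (rotate_state k) i = state k ((i + 1) mod 4)"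
  unfolding atLeastAtMost_1_16 by (drule less_4_cases) (auto simp: state_def rotate_state_def)

lemma state_flip_state: "k \<in> {1..16} \<Longrightarrow> i < 4 \<Longrightarrow> state (flip_state k) i = - state k i"
  unfolding atLeastAtMost_1_16 by (drule less_4_cases) (auto simp: state_def flip_state_def)

lemma theta_rotate_state:
  assumes "k \<in> {1..16}" "l \<in> {1..16}"
  shows "theta J kB T (rotate_state k) (rotate_state l) = theta J kB T k l"
proof -
  have "cube_energy J (state (rotate_state k)) (state (rotate_state l))
      = cube_energy J (\<lambda>i. state k ((i + 1) mod 4)) (\<lambda>i. state l ((i + 1) mod 4))"
    by (rule cube_energy_cong) (use assms state_rotate_state in auto)
  also have "\<dots> = cube_energy J (state k) (state l)" by (rule cube_energy_rotate)
  finally show ?thesis unfolding theta_def by simp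
qed

lemma theta_flip_state:
  assumes "k \<in> {1..16}" "l \<in> {1..16}"
  shows "theta J kB T (flip_state k) (flip_state l) = theta J kB T k l"
proof -
  have "cube_energy J (state (flip_state k)) (state (flip_state l))
      = cube_energy J (\<lambda>i. - state k i) (\<lambda>i. - state l i)"
    by (rule cube_energy_cong) (use assms state_flip_state in auto)
  also have "\<dots> = cube_energy J (state k) (state l)" by (rule cube_energy_uminus)
  finally show ?thesis unfolding theta_def by simp
qed

lemma GG_subset: "GG j \<subseteq> {1..16}"
  by (auto simp: GG_def)

lemma rotate_state_GG: "rotate_state ` GG j = GG j"
  by (auto simp: GG_def rotate_state_def)

lemma flip_state_GG: "flip_state ` GG j = GG j"
  by (auto simp: GG_def flip_state_def)

lemma inj_on_rotate_state: "inj_on rotate_state {1..16}"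
proof (rule inj_on_inverseI)
  fix k :: nat assume "k \<in> {1..16}"
  then show "1 + (((rotate_state k - 1) mod 8) * 2 + (rotate_state k - 1) div 8) = k"
    unfolding atLeastAtMost_1_16 by (auto simp: rotate_state_def)
qed

lemma inj_on_flip_state: "inj_on flip_state {1..16}"
  by (rule inj_onI) (auto simp: flip_state_def)

definition class_sum :: "(pos set \<Rightarrow> real) \<Rightarrow> real \<Rightarrow> real \<Rightarrow> nat \<Rightarrow> nat \<Rightarrow> real" where
  "class_sum J kB T k j = (\<Sum>l\<in>GG j. theta J kB T k l)"

lemma class_sum_invariant:
  assumes k: "k \<in> {1..16}" and g: "inj_on g {1..16}" "g ` GG j = GG j"
    and theta: "\<And>l. l \<in> {1..16} \<Longrightarrow> theta J kB T (g k) (g l) = theta J kB T k l"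
  shows "class_sum J kB T (g k) j = class_sum J kB T k j"
proof -
  have "inj_on g (GG j)" using g(1) GG_subset by (rule inj_on_subset)
  then have "class_sum J kB T (g k) j = (\<Sum>l\<in>GG j. theta J kB T (g k) (g l))"
    unfolding class_sum_def by (subst g(2)[symmetric]) (rule sum.reindex_cong[OF _ refl refl])
  also have "\<dots> = class_sum J kB T k j"
    unfolding class_sum_def using GG_subset by (intro sum.cong refl theta) blast
  finally show ?thesis .
qed

definition layer_class :: "nat \<Rightarrow> nat" where
  "layer_class k = (if k \<in> GG 1 then 0 else if k \<in> GG 2 then 1 else if k \<in> GG 3 then 2 else 3)"

lemma layer_class_less: "layer_class k < 4"
  by (simp add: layer_class_def)

lemma layer_class_GG: "j < 4 \<Longrightarrow> l \<in> GG (j + 1) \<Longrightarrow> layer_class l = j"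
  by (drule less_4_cases) (auto simp: GG_def layer_class_def)

text \<open>Each class \<open>G\<^sub>j\<close> is an orbit of the group generated by rotation and flip, so the row sums of
  \<open>\<theta>\<close> over a class only depend on the class of the row.\<close>

lemma class_sum_eq_representative:
  assumes k: "k \<in> {1..16}"
  shows "class_sum J kB T k j = class_sum J kB T (rr (layer_class k + 1)) j"
proof -
  let ?S = "\<lambda>k. class_sum J kB T k j"
  have R: "?S (rotate_state k) = ?S k" if "k \<in> {1..16}" for k
    by (rule class_sum_invariant[OF that inj_on_rotate_state rotate_state_GG theta_rotate_state[OF that]])
  have F: "?S (flip_state k) = ?S k" if "k \<in> {1..16}" for k
    using class_sum_invariant[OF that inj_on_flip_state flip_state_GG theta_flip_state[OF that]] .
  have "?S 16 = ?S 1" using F[of 1] by (simp add: flip_state_def)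
  moreover have "?S 9 = ?S 2" using R[of 2] by (simp add: rotate_state_def)
  moreover have "?S 5 = ?S 9" using R[of 9] by (simp add: rotate_state_def)
  moreover have "?S 3 = ?S 5" using R[of 5] by (simp add: rotate_state_def numeral_3_eq_3)
  moreover have "?S 15 = ?S 2" using F[of 2] by (simp add: flip_state_def)
  moreover have "?S 8 = ?S 9" using F[of 9] by (simp add: flip_state_def)
  moreover have "?S 12 = ?S 5" using F[of 5] by (simp add: flip_state_def)
  moreover have "?S 14 = ?S 3" using F[of 3] by (simp add: flip_state_def)
  moreover have "?S 10 = ?S 4" using R[of 4] by (simp add: rotate_state_def)
  moreover have "?S 13 = ?S 10" using R[of 10] by (simp add: rotate_state_def)
  moreover have "?S 7 = ?S 13" using R[of 13] by (simp add: rotate_state_def)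
  moreover have "?S 11 = ?S 6" using R[of 6] by (simp add: rotate_state_def)
  ultimately show ?thesis
    using k unfolding atLeastAtMost_1_16 by (auto simp: layer_class_def rr_def GG_def)
qed

lemma tau_carrier: "tau J kB T \<in> carrier_mat 4 4"
  by (simp add: tau_def)

lemma tau_index: "i < 4 \<Longrightarrow> j < 4 \<Longrightarrow> tau J kB T $$ (i, j) = class_sum J kB T (rr (i + 1)) (j + 1)"
  by (simp add: tau_def class_sum_def)

lemma sum_1_16_by_class: "(\<Sum>l\<in>{1..16::nat}. f l) = (\<Sum>j<4. \<Sum>l\<in>GG (j + 1). f l)"
proof -
  have "{1..16::nat} = GG 1 \<union> GG 2 \<union> GG 3 \<union> GG 4" unfolding atLeastAtMost_1_16 by (auto simp: GG_def)
  then have "(\<Sum>l\<in>{1..16::nat}. f l) = sum f (GG 1) + sum f (GG 2) + sum f (GG 3) + sum f (GG 4)"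
    by (simp add: sum.union_disjoint GG_def add_ac)
  then show ?thesis by (simp add: eval_nat_numeral)
qed

text \<open>\<open>\<tau>\<close> is the quotient of \<open>\<theta>\<close> by the equitable partition \<open>G\<^sub>1, \<dots>, G\<^sub>4\<close>, so an eigenvector
  of \<open>\<tau>\<close> lifts to an eigenvector of \<open>\<theta>\<close>, constant on each class.\<close>

lemma tau_eigenvector_lift:
  assumes u: "u \<in> carrier_vec 4" and ev: "tau J kB T *\<^sub>v u = \<mu> \<cdot>\<^sub>v u" and k: "k \<in> {1..16}"
  shows "(\<Sum>l\<in>{1..16}. theta J kB T k l * u $ layer_class l) = \<mu> * u $ layer_class k"
proof -
  have "(\<Sum>l\<in>{1..16}. theta J kB T k l * u $ layer_class l)
      = (\<Sum>j<4. \<Sum>l\<in>GG (j + 1). theta J kB T k l * u $ j)"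
    unfolding sum_1_16_by_class by (intro sum.cong refl) (simp add: layer_class_GG)
  also have "\<dots> = (\<Sum>j<4. class_sum J kB T k (j + 1) * u $ j)"
    by (simp add: class_sum_def sum_distrib_right)
  also have "\<dots> = (\<Sum>j<4. tau J kB T $$ (layer_class k, j) * u $ j)"
    by (intro sum.cong refl)
      (simp add: tau_index layer_class_less class_sum_eq_representative[OF k])
  also have "\<dots> = (tau J kB T *\<^sub>v u) $ layer_class k"
    using index_mult_mat_vec_sum[OF tau_carrier u layer_class_less] by simp
  also have "\<dots> = \<mu> * u $ layer_class k" using ev u layer_class_less[of k] by simp
  finally show ?thesis .
qed

section \<open>The partition function\<close>

definition state_index :: "(nat \<Rightarrow> real) \<Rightarrow> nat" where
  "state_index s = 1 + (\<Sum>i<4. 2 ^ i * (if s i = 1 then 0 else 1))"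

lemma sum_lessThan_4: "(\<Sum>i<(4::nat). f i) = f 0 + f 1 + f 2 + (f 3 :: 'a::comm_monoid_add)"
  by (simp add: eval_nat_numeral add_ac)

lemma state_index_cong: "(\<And>i. i < 4 \<Longrightarrow> s i = t i) \<Longrightarrow> state_index s = state_index t"
  unfolding state_index_def by (intro arg_cong[where f="\<lambda>x. 1 + x"] sum.cong) auto

lemma state_index_state: "k \<in> {1..16} \<Longrightarrow> state_index (state k) = k"
  unfolding atLeastAtMost_1_16 by (auto simp: state_index_def sum_lessThan_4 state_def)

lemma state_state_index:
  assumes s: "\<And>i. i < 4 \<Longrightarrow> s i \<in> {-1, 1}" and i: "i < 4"
  shows "state (state_index s) i = s i"
proof -
  have "s 0 \<in> {-1, 1}" "s 1 \<in> {-1, 1}" "s 2 \<in> {-1, 1}" "s 3 \<in> {-1, 1}" using s by auto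
  with less_4_cases[OF i] show ?thesis by (auto simp: state_index_def sum_lessThan_4 state_def)
qed

lemma state_index_range: "state_index s \<in> {1..16}"
proof -
  have "(\<Sum>i<4. 2 ^ i * (if s i = 1 then 0 else 1)) \<le> (\<Sum>i<4. (2::nat) ^ i)"
    by (intro sum_mono) auto
  then show ?thesis by (simp add: state_index_def sum_lessThan_4)
qed

lemma state_in_pm1: "state k i \<in> {-1, 1}"
  unfolding state_def by (cases "((k - 1) div 2 ^ i) mod 2 = 0") (auto simp: mod2_eq_if)

definition layer_config :: "nat \<Rightarrow> (nat \<Rightarrow> nat) \<Rightarrow> nat \<times> nat \<Rightarrow> real" where
  "layer_config M ks = (\<lambda>(m, i). if m < M \<and> i < 4 then state (ks m) i else undefined)"

lemma bij_betw_layer_config: "bij_betw (layer_config M) (Pi\<^sub>E {0..<M} (\<lambda>_. {1..16})) (configs M)"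
proof (rule bij_betw_byWitness[where f' = "\<lambda>\<sigma> m. if m < M then state_index (\<lambda>i. \<sigma> (m, i)) else undefined"])
  show "\<forall>ks\<in>Pi\<^sub>E {0..<M} (\<lambda>_. {1..16}).
      (\<lambda>m. if m < M then state_index (\<lambda>i. layer_config M ks (m, i)) else undefined) = ks"
  proof (intro ballI ext)
    fix ks :: "nat \<Rightarrow> nat" and m :: nat assume ks: "ks \<in> Pi\<^sub>E {0..<M} (\<lambda>_. {1..16})"
    show "(if m < M then state_index (\<lambda>i. layer_config M ks (m, i)) else undefined) = ks m"
    proof (cases "m < M")
      case True
      have "state_index (\<lambda>i. layer_config M ks (m, i)) = state_index (state (ks m))"
        using True by (intro state_index_cong) (simp add: layer_config_def)
      also have "\<dots> = ks m" using ks True by (intro state_index_state) auto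
      finally show ?thesis using True by simp
    qed (use ks in \<open>auto simp: PiE_def extensional_def\<close>)
  qed
  show "\<forall>\<sigma>\<in>configs M. layer_config M (\<lambda>m. if m < M then state_index (\<lambda>i. \<sigma> (m, i)) else undefined) = \<sigma>"
  proof (intro ballI ext, clarify)
    fix \<sigma> and m i :: nat assume "\<sigma> \<in> configs M"
    then have "\<And>m i. m < M \<Longrightarrow> i < 4 \<Longrightarrow> \<sigma> (m, i) \<in> {-1, 1}"
      and "\<And>m i. \<not> (m < M \<and> i < 4) \<Longrightarrow> \<sigma> (m, i) = undefined"
      unfolding configs_def by (auto simp: PiE_def extensional_def Pi_def)
    then show "layer_config M (\<lambda>m. if m < M then state_index (\<lambda>i. \<sigma> (m, i)) else undefined) (m, i) = \<sigma> (m, i)"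
      using state_state_index[of "\<lambda>i. \<sigma> (m, i)" i] by (auto simp: layer_config_def)
  qed
  have "state k i = -1 \<or> state k i = 1" for k i using state_in_pm1 by auto
  then show "layer_config M ` Pi\<^sub>E {0..<M} (\<lambda>_. {1..16}) \<subseteq> configs M"
    unfolding configs_def layer_config_def by (auto simp: PiE_def extensional_def) metis
  show "(\<lambda>\<sigma> m. if m < M then state_index (\<lambda>i. \<sigma> (m, i)) else undefined) ` configs M
      \<subseteq> Pi\<^sub>E {0..<M} (\<lambda>_. {1..16})"
    using state_index_range by (auto simp: PiE_def extensional_def)
qed

lemma exp_total_energy_layer_config:
  assumes "M > 0"
  shows "exp (- total_energy J M (layer_config M ks) / (kB * T))
    = (\<Prod>m<M. theta J kB T (ks m) (ks ((m + 1) mod M)))"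
proof -
  have "total_energy J M (layer_config M ks)
      = (\<Sum>m<M. cube_energy J (state (ks m)) (state (ks ((m + 1) mod M))))"
    unfolding total_energy_def using assms
    by (intro sum.cong refl cube_energy_cong) (auto simp: layer_config_def)
  then show ?thesis by (simp add: theta_def sum_negf sum_divide_distrib flip: exp_sum)
qed

lemma partition_fn_eq_cyclic_sum:
  assumes M: "M > 0"
  shows "partition_fn J kB M T =
    (\<Sum>ks\<in>Pi\<^sub>E {0..<M} (\<lambda>_. {1..16}). \<Prod>m<M. theta J kB T (ks m) (ks ((m + 1) mod M)))"
proof -
  have "partition_fn J kB M T
      = (\<Sum>ks\<in>Pi\<^sub>E {0..<M} (\<lambda>_. {1..16}). exp (- total_energy J M (layer_config M ks) / (kB * T)))"
    unfolding partition_fn_def by (rule sum.reindex_bij_betw[OF bij_betw_layer_config, symmetric])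
  also have "\<dots> = (\<Sum>ks\<in>Pi\<^sub>E {0..<M} (\<lambda>_. {1..16}). \<Prod>m<M. theta J kB T (ks m) (ks ((m + 1) mod M)))"
    by (intro sum.cong refl exp_total_energy_layer_config[OF M])
  finally show ?thesis .
qed

section \<open>The largest eigenvalue of \<open>\<tau>\<close>\<close>

lemma tau_pos: "i < 4 \<Longrightarrow> j < 4 \<Longrightarrow> tau J kB t $$ (i, j) > 0"
  unfolding tau_index class_sum_def theta_def by (intro sum_pos) (auto simp: GG_def)

lemma lambda_max_positive_eigenvector: "\<exists>u. positive_eigenvector (tau J kB t) 4 u (lambda_max J kB t)"
proof -
  have card: "CARD(4) = 4" by simp
  obtain u lam where P: "positive_eigenvector (tau J kB t) 4 u lam"
    using positive_eigenvector_exists[where 'n = 4, unfolded card, OF tau_carrier tau_pos] by blast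
  have "lambda_max J kB t = Max {x. poly (char_poly (tau J kB t)) x = 0}"
    unfolding lambda_max_def det_smult_one_minus_eq_char_poly[OF tau_carrier] ..
  also have "\<dots> = lam"
    by (rule positive_eigenvalue_is_max_root[OF tau_carrier tau_pos P zero_less_numeral])
  finally show ?thesis using P by auto
qed

lemma lambda_max_pos: "lambda_max J kB t > 0"
  using lambda_max_positive_eigenvector positive_eigenvalue_pos[OF tau_carrier tau_pos] by fastforce

lemma lambda_max_char_poly_root: "poly (char_poly (tau J kB t)) (lambda_max J kB t) = 0"
  using lambda_max_positive_eigenvector positive_eigenvector_eigenvector[OF tau_carrier]
    eigenvalue_root_char_poly[OF tau_carrier] by (fastforce simp: eigenvalue_def)

lemma partition_fn_ln_limit:
  "(\<lambda>M. ln (partition_fn J kB M T) / (4 * real M)) \<longlonglongrightarrow> ln (lambda_max J kB T) / 4"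
proof -
  obtain u where P: "positive_eigenvector (tau J kB T) 4 u (lambda_max J kB T)"
    using lambda_max_positive_eigenvector by blast
  have "(\<lambda>M. ln (partition_fn J kB M T) / real M) \<longlonglongrightarrow> ln (lambda_max J kB T)"
  proof (rule transfer_matrix_ln_limit
      [where S = "{1..16}" and g = "theta J kB T" and w = "\<lambda>l. u $ layer_class l"])
    show "theta J kB T k l > 0" for k l by (simp add: theta_def)
    show "u $ layer_class k > 0" for k
      using P layer_class_less[of k] by (simp add: positive_eigenvector_def)
    show "(\<Sum>l\<in>{1..16}. theta J kB T k l * u $ layer_class l) = lambda_max J kB T * u $ layer_class k"
      if "k \<in> {1..16}" for k
      using P that by (intro tau_eigenvector_lift) (auto simp: positive_eigenvector_def)
  qed (auto simp: partition_fn_eq_cyclic_sum)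
  then have "(\<lambda>M. ln (partition_fn J kB M T) / real M / 4) \<longlonglongrightarrow> ln (lambda_max J kB T) / 4"
    by (intro tendsto_divide tendsto_const) simp_all
  then show ?thesis by (simp add: mult.commute)
qed

definition tau_entry :: "(pos set \<Rightarrow> real) \<Rightarrow> real \<Rightarrow> nat \<Rightarrow> nat \<Rightarrow> real \<Rightarrow> real" where
  "tau_entry J kB i j t =
     (\<Sum>l\<in>GG (j + 1). exp (- cube_energy J (state (rr (i + 1))) (state l) / (kB * t)))"

definition tau_entry_deriv :: "(pos set \<Rightarrow> real) \<Rightarrow> real \<Rightarrow> nat \<Rightarrow> nat \<Rightarrow> real \<Rightarrow> real" where
  "tau_entry_deriv J kB i j t = (\<Sum>l\<in>GG (j + 1).
     exp (- cube_energy J (state (rr (i + 1))) (state l) / (kB * t))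
       * (cube_energy J (state (rr (i + 1))) (state l) / (kB * t\<^sup>2)))"

lemma tau_eq_tau_entry: "i < 4 \<Longrightarrow> j < 4 \<Longrightarrow> tau J kB t $$ (i, j) = tau_entry J kB i j t"
  by (simp add: tau_index class_sum_def theta_def tau_entry_def)

lemma boltzmann_factor_has_derivative:
  assumes "kB \<noteq> 0" "t \<noteq> 0"
  shows "((\<lambda>t. exp (- E / (kB * t))) has_real_derivative exp (- E / (kB * t)) * (E / (kB * t\<^sup>2)))
    (at t)"
  using assms by (auto intro!: derivative_eq_intros simp: field_simps power2_eq_square)

lemma tau_entry_has_derivative:
  "kB \<noteq> 0 \<Longrightarrow> t \<noteq> 0 \<Longrightarrow> (tau_entry J kB i j has_real_derivative tau_entry_deriv J kB i j t) (at t)"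
  unfolding tau_entry_def[abs_def] tau_entry_deriv_def
  by (intro DERIV_sum boltzmann_factor_has_derivative)

lemma tau_entry_deriv_differentiable:
  assumes "kB \<noteq> 0" "t \<noteq> 0"
  shows "tau_entry_deriv J kB i j differentiable (at t)"
proof -
  have "(\<lambda>t. exp (- E / (kB * t))) differentiable (at t)" for E
    using boltzmann_factor_has_derivative[OF assms] real_differentiable_def by blast
  then show ?thesis unfolding tau_entry_deriv_def[abs_def] using assms
    by (intro differentiable_sum ballI differentiable_mult)
      (auto simp: GG_def intro!: derivative_intros)
qed

lemma lambda_max_isCont:
  assumes "kB \<noteq> 0" "t0 \<noteq> 0"
  shows "isCont (lambda_max J kB) t0"
proof -
  obtain u where PA: "positive_eigenvector (tau J kB t0) 4 u (lambda_max J kB t0)"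
    using lambda_max_positive_eigenvector by blast
  define D where
    "D t = (\<Sum>i<4. \<Sum>j<4. \<bar>tau_entry J kB i j t - tau_entry J kB i j t0\<bar> * (u $ j / u $ i))" for t
  have le: "norm (lambda_max J kB t - lambda_max J kB t0) \<le> D t" for t
  proof -
    obtain w where PB: "positive_eigenvector (tau J kB t) 4 w (lambda_max J kB t)"
      using lambda_max_positive_eigenvector by blast
    show ?thesis
      using positive_eigenvalue_perturbation[OF tau_carrier tau_carrier _ PA PB] tau_pos
      by (simp add: D_def tau_eq_tau_entry less_imp_le)
  qed
  have "isCont (tau_entry J kB i j) t0" for i j
    by (rule DERIV_isCont[OF tau_entry_has_derivative[OF assms]])
  then have "(D \<longlongrightarrow> D t0) (at t0)" unfolding D_def isCont_def by (intro tendsto_intros)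
  then have D0: "(D \<longlongrightarrow> 0) (at t0)" by (simp add: D_def)
  have "\<forall>\<^sub>F t in at t0. norm (lambda_max J kB t - lambda_max J kB t0) \<le> D t"
    using le by (simp add: always_eventually)
  then have "((\<lambda>t. lambda_max J kB t - lambda_max J kB t0) \<longlongrightarrow> 0) (at t0)"
    using D0 by (rule Lim_null_comparison)
  then show ?thesis unfolding isCont_def by (simp add: LIM_zero_iff)
qed

lemma char_det_tau: "char_det 4 (tau_entry J kB) (t, x) = poly (char_poly (tau J kB t)) x"
  using char_det_eq_det[OF tau_carrier, where e = "tau_entry J kB" and t = t and x = x]
  by (simp add: tau_eq_tau_entry det_smult_one_minus_eq_char_poly[OF tau_carrier])

definition lambda_max_deriv :: "(pos set \<Rightarrow> real) \<Rightarrow> real \<Rightarrow> real \<Rightarrow> real" where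
  "lambda_max_deriv J kB t =
     - char_det_dt 4 (tau_entry J kB) (tau_entry_deriv J kB) (t, lambda_max J kB t)
       / char_det_dx 4 (tau_entry J kB) (t, lambda_max J kB t)"

text \<open>\<open>\<partial>/\<partial>x det (x I - \<tau>)\<close> at the largest root is the derivative of the characteristic
  polynomial there, which is positive because that root is simple.\<close>

lemma char_det_dx_lambda_max_pos:
  assumes "kB \<noteq> 0" "t \<noteq> 0"
  shows "char_det_dx 4 (tau_entry J kB) (t, lambda_max J kB t) > 0"
proof -
  let ?p = "char_poly (tau J kB t)" and ?L = "lambda_max J kB t"
  have "(char_det 4 (tau_entry J kB) has_derivative
      (\<lambda>(h, k). h * char_det_dt 4 (tau_entry J kB) (tau_entry_deriv J kB) (t, ?L)
        + k * char_det_dx 4 (tau_entry J kB) (t, ?L))) (at (t, ?L))"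
    using tau_entry_has_derivative[OF assms] by (intro char_det_has_derivative) simp
  from has_derivative_compose[OF has_derivative_Pair[OF has_derivative_const has_derivative_ident] this]
  have "(poly ?p has_derivative (\<lambda>k. k * char_det_dx 4 (tau_entry J kB) (t, ?L))) (at ?L)"
    by (simp add: char_det_tau)
  moreover have "(\<lambda>k. k * char_det_dx 4 (tau_entry J kB) (t, ?L))
      = (*) (char_det_dx 4 (tau_entry J kB) (t, ?L))"
    by (simp add: fun_eq_iff mult.commute)
  ultimately have "(poly ?p has_real_derivative char_det_dx 4 (tau_entry J kB) (t, ?L)) (at ?L)"
    by (simp add: has_field_derivative_def)
  then have "char_det_dx 4 (tau_entry J kB) (t, ?L) = poly (pderiv ?p) ?L"
    using poly_DERIV DERIV_unique by blast
  moreover obtain u where "positive_eigenvector (tau J kB t) 4 u ?L"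
    using lambda_max_positive_eigenvector by blast
  ultimately show ?thesis
    using pderiv_char_poly_pos_at_positive_eigenvalue[OF tau_carrier tau_pos] by simp
qed

lemma lambda_max_has_real_derivative:
  assumes "kB \<noteq> 0" "t \<noteq> 0"
  shows "(lambda_max J kB has_real_derivative lambda_max_deriv J kB t) (at t)"
  unfolding lambda_max_deriv_def
proof (rule implicit_function_has_real_derivative)
  show "(char_det 4 (tau_entry J kB) has_derivative
      (\<lambda>(h, k). h * char_det_dt 4 (tau_entry J kB) (tau_entry_deriv J kB) (t, lambda_max J kB t)
        + k * char_det_dx 4 (tau_entry J kB) (t, lambda_max J kB t))) (at (t, lambda_max J kB t))"
    using tau_entry_has_derivative[OF assms] by (intro char_det_has_derivative) simp
  show "char_det_dx 4 (tau_entry J kB) (t, lambda_max J kB t) \<noteq> 0"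
    using char_det_dx_lambda_max_pos[OF assms, where J = J] by simp
  show "isCont (lambda_max J kB) t" by (rule lambda_max_isCont[OF assms])
  show "\<forall>\<^sub>F s in nhds t. char_det 4 (tau_entry J kB) (s, lambda_max J kB s) = 0"
    by (simp add: char_det_tau lambda_max_char_poly_root)
qed

lemma lambda_max_deriv_differentiable:
  assumes "kB \<noteq> 0" "t \<noteq> 0"
  shows "lambda_max_deriv J kB differentiable (at t)"
proof -
  let ?z = "(t, lambda_max J kB t)"
  have "((\<lambda>s. (s, lambda_max J kB s)) has_derivative (\<lambda>h. (h, lambda_max_deriv J kB t * h))) (at t)"
    using lambda_max_has_real_derivative[OF assms, where J = J]
    by (intro has_derivative_Pair has_derivative_ident) (simp add: has_field_derivative_def)
  then have curve: "(\<lambda>s. (s, lambda_max J kB s)) differentiable (at t)" by (rule differentiableI)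
  have e: "\<And>i j. (tau_entry J kB i j has_real_derivative tau_entry_deriv J kB i j (fst ?z))
      (at (fst ?z))"
    and e': "\<And>i j. tau_entry_deriv J kB i j differentiable (at (fst ?z))"
    using tau_entry_has_derivative[OF assms] tau_entry_deriv_differentiable[OF assms] by simp_all
  show ?thesis unfolding lambda_max_deriv_def[abs_def]
    using char_det_dx_lambda_max_pos[OF assms, where J = J]
    by (intro differentiable_divide differentiable_minus
        differentiable_compose[OF char_det_partials_differentiable(1)[OF e e'] curve]
        differentiable_compose[OF char_det_partials_differentiable(2)[OF e e'] curve]) auto
qed

lemma free_energy_eq: "free_energy J kB T = - kB * T * (ln (lambda_max J kB T) / 4)"
  unfolding free_energy_def using limI[OF partition_fn_ln_limit] by simp

lemma ln_lambda_max_has_real_derivative: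
  assumes "kB \<noteq> 0" "t \<noteq> 0"
  shows "((\<lambda>t. ln (lambda_max J kB t) / 4) has_real_derivative
    lambda_max_deriv J kB t / lambda_max J kB t / 4) (at t)"
  using lambda_max_has_real_derivative[OF assms] lambda_max_pos[of J kB t]
  by (auto intro!: derivative_eq_intros simp: field_simps)

lemma ln_lambda_max_deriv_differentiable:
  assumes "kB \<noteq> 0" "t \<noteq> 0"
  shows "(\<lambda>t. lambda_max_deriv J kB t / lambda_max J kB t / 4) differentiable (at t)"
proof -
  have "lambda_max J kB differentiable (at t)"
    using lambda_max_has_real_derivative[OF assms] by (auto simp: real_differentiable_def)
  then show ?thesis using lambda_max_pos[of J kB t]
    by (intro differentiable_divide differentiable_const lambda_max_deriv_differentiable[OF assms]) auto
qed

theorem theorem1: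
  fixes J :: "pos set \<Rightarrow> real" and kB T :: real
  assumes "kB > 0" and "T > 0"
  shows "(\<lambda>M. ln (partition_fn J kB M T) / (4 * real M)) \<longlonglongrightarrow> ln (lambda_max J kB T) / 4
    \<and> free_energy J kB T = - kB * T / 4 * ln (lambda_max J kB T)
    \<and> internal_energy J kB T = kB * T\<^sup>2 * deriv (\<lambda>t. ln (lambda_max J kB t) / 4) T
    \<and> heat_capacity J kB T =
        2 * kB * T * deriv (\<lambda>t. ln (lambda_max J kB t) / 4) T
        + kB * T\<^sup>2 * deriv (deriv (\<lambda>t. ln (lambda_max J kB t) / 4)) T"
proof -
  have kB: "kB \<noteq> 0" and T: "T \<noteq> 0" using assms by simp_all
  have "((\<lambda>t. ln (lambda_max J kB t) / 4) has_real_derivative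
      lambda_max_deriv J kB t / lambda_max J kB t / 4) (at t)" if "t > 0" for t
    using ln_lambda_max_has_real_derivative[OF kB] that by simp
  note thermo = thermodynamic_derivatives[where F = "free_energy J kB",
      OF free_energy_eq this ln_lambda_max_deriv_differentiable[OF kB T] assms(2)]
  show ?thesis
    using partition_fn_ln_limit free_energy_eq[of J kB T] thermo
    unfolding internal_energy_def[abs_def] heat_capacity_def by simp
qed

end
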